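(* Let $a\le k\le n$ be integers and let $\gamma$ be a boundary condition of the one-row region $\{1\}\times[a,n]$ such that the non-$\varnothing$ values of $\gamma_N$ are exactly $[a,k]$ (each once), the non-$\varnothing$ values of $\gamma_S$ are exactly $[a,k]$ (each once), and $\gamma_E(1)=\gamma_W(1)=\varnothing$. Let $w\in S_{[a,n]}$ (resp. $u\in S_{[a,n]}$) be the permutation with $w(\ell)=\gamma_N^{-1}(\ell)$ (resp. $u(\ell)=\gamma_S^{-1}(\ell)$) for $\ell\in[a,k]$ and decreasing on $(k,n]$. Then $u\xrightarrow{k}w$ if and only if there exists a BPD of $\{1\}\times[a,n]$ satisfying $\gamma$. In this case there is exactly one such BPD $D$, and $\{c: D(1,c)\text{ is blank}\}=\mathrm{fix}_{(k,n]}(u,w)$.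
   Context: $S_{[a,n]}$ is the set of bijections of $\mathbb Z$ fixing every integer outside $[a,n]$; $\gamma_N^{-1}(\ell)$ denotes the column $c$ with $\gamma_N(c)=\ell$ (similarly $\gamma_S^{-1}$). $\tau_{i,j}$ is the transposition of $i<j$, $u\tau_{i,j}=u\circ\tau_{i,j}$, $\ell(u)$ = number of inversions; $u\lessdot_k u\tau_{i,j}$ if $i\le k<j$ and $\ell(u\tau_{i,j})=\ell(u)+1$; $u\xrightarrow{k}w$ if there is a chain $u=v_1\lessdot_k\cdots\lessdot_k v_s=w$ ($s\ge1$), $v_{t+1}=v_t\tau_{i_t,j_t}$, with $v_1(i_1)<\cdots<v_{s-1}(i_{s-1})$. $\mathrm{fix}_I(u,w)=\{u(t):t\in I,\ u(t)=w(t)\}$. Bumpless pipedreams on the one-row region: a tiling assigns each cell $(1,c)$, $c\in[a,n]$, one of: blank; horizontal (pipe joining left and right edges); vertical (top and bottom); r-elbow (bottom and right); j-elbow (top and left); cross (a left–right and a top–bottom pipe, which cross, the top–bottom one vertical). Consistent: adjacent cells agree on whether a pipe uses their common edge. A pipe enters from the row if it crosses the right edge of $(1,n)$, exits from the row if it crosses the left edge of $(1,a)$, enters (exits) from column $c$ if it crosses the top (bottom) edge of $(1,c)$. A BPD is a consistent tiling in which any two pipes cross at most once and every pipe enters and exits. A labeling (distinct integers on pipes) is valid if at each crossing the vertical pipe has the smaller label. A boundary condition $\gamma=(\gamma_N,\gamma_E,\gamma_S,\gamma_W)$, $\gamma_N,\gamma_S:[a,n]\to\mathbb Z\sqcup\{\varnothing\}$,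 $\gamma_E,\gamma_W:\{1\}\to\mathbb Z\sqcup\{\varnothing\}$, is satisfied by a BPD if some valid labeling makes a pipe enter (exit) from the row iff $\gamma_E(1)\neq\varnothing$ ($\gamma_W(1)\ne\varnothing$), with that label, and a pipe enter (exit) from column $c$ iff $\gamma_N(c)\neq\varnothing$ ($\gamma_S(c)\ne\varnothing$), with that label. *)

theory Defs
  imports "HOL-Combinatorics.Transposition"
begin

definition Sperm :: "int \<Rightarrow> int \<Rightarrow> (int \<Rightarrow> int) set" where
  "Sperm a n = {u. bij u \<and> (\<forall>t. t \<notin> {a..n} \<longrightarrow> u t = t)}"

definition perm_length :: "(int \<Rightarrow> int) \<Rightarrow> nat" where
  "perm_length u = card {(i, j). i < j \<and> u j < u i}"

definition kcover :: "int \<Rightarrow> (int \<Rightarrow> int) \<Rightarrow> int \<Rightarrow> int \<Rightarrow> (int \<Rightarrow> int) \<Rightarrow> bool" where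
  "kcover k u i j v \<longleftrightarrow> i \<le> k \<and> k < j \<and> v = u \<circ> transpose i j
      \<and> perm_length v = perm_length u + 1"

text \<open>u --k--> w: a chain v_1 = u, ..., v_s = w (s >= 1) of k-covers
  v_{t+1} = v_t tau_{i_t,j_t} with v_1(i_1) < ... < v_{s-1}(i_{s-1}).
  Lists are 0-indexed: vs ! t is v_{t+1}, is ! t is i_{t+1}, js ! t is j_{t+1}.\<close>
definition kpath :: "int \<Rightarrow> (int \<Rightarrow> int) \<Rightarrow> (int \<Rightarrow> int) \<Rightarrow> bool" where
  "kpath k u w \<longleftrightarrow>
     (\<exists>vs is js. vs \<noteq> [] \<and> hd vs = u \<and> last vs = w
        \<and> length is = length vs - 1 \<and> length js = length vs - 1
        \<and> (\<forall>t < length vs - 1. kcover k (vs ! t) (is ! t) (js ! t) (vs ! (t + 1)))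
        \<and> sorted_wrt (<) (map (\<lambda>t. (vs ! t) (is ! t)) [0..<length vs - 1]))"

definition fixset :: "int set \<Rightarrow> (int \<Rightarrow> int) \<Rightarrow> (int \<Rightarrow> int) \<Rightarrow> int set" where
  "fixset I u w = {u t | t. t \<in> I \<and> u t = w t}"

text \<open>Tiles: blank, horizontal, vertical, r-elbow (bottom and right),
  j-elbow (top and left), cross.\<close>
datatype tile = Blank | Hor | Vert | RElb | JElb | Cross

text \<open>A tiling of the row {1} x [a,n]: the tile of cell (1,c) is D c (only c in [a,n] matters).\<close>
type_synonym tiling = "int \<Rightarrow> tile"

fun uses_left :: "tile \<Rightarrow> bool" where
  "uses_left Hor = True" | "uses_left JElb = True" | "uses_left Cross = True"
| "uses_left _ = False"

fun uses_right :: "tile \<Rightarrow> bool" where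
  "uses_right Hor = True" | "uses_right RElb = True" | "uses_right Cross = True"
| "uses_right _ = False"

text \<open>Consistency: horizontally adjacent cells agree on their common edge
  (the only interior edges of a one-row region).\<close>
definition consistent :: "int \<Rightarrow> int \<Rightarrow> tiling \<Rightarrow> bool" where
  "consistent a n D \<longleftrightarrow> (\<forall>c. a \<le> c \<and> c < n \<longrightarrow> (uses_right (D c) \<longleftrightarrow> uses_left (D (c + 1))))"

text \<open>Edges of the row: VE c is the vertical edge on the left of cell (1,c)
  (= right edge of cell (1,c-1)); TE c / BE c are the top / bottom edges of cell (1,c).\<close>
datatype edge = VE int | TE int | BE int

datatype strand_kind = SH | SV | SR | SJ

fun tile_strands :: "tile \<Rightarrow> strand_kind set" where
  "tile_strands Blank = {}"
| "tile_strands Hor = {SH}"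
| "tile_strands Vert = {SV}"
| "tile_strands RElb = {SR}"
| "tile_strands JElb = {SJ}"
| "tile_strands Cross = {SH, SV}"

fun strand_edges :: "int \<times> strand_kind \<Rightarrow> edge set" where
  "strand_edges (c, SH) = {VE c, VE (c + 1)}"
| "strand_edges (c, SV) = {TE c, BE c}"
| "strand_edges (c, SR) = {BE c, VE (c + 1)}"
| "strand_edges (c, SJ) = {TE c, VE c}"

definition strands :: "int \<Rightarrow> int \<Rightarrow> tiling \<Rightarrow> (int \<times> strand_kind) set" where
  "strands a n D = {(c, s). c \<in> {a..n} \<and> s \<in> tile_strands (D c)}"

definition joined :: "int \<Rightarrow> int \<Rightarrow> tiling \<Rightarrow> int \<times> strand_kind \<Rightarrow> int \<times> strand_kind \<Rightarrow> bool" where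
  "joined a n D x y \<longleftrightarrow> x \<in> strands a n D \<and> y \<in> strands a n D \<and> x \<noteq> y
      \<and> strand_edges x \<inter> strand_edges y \<noteq> {}"

type_synonym pipe = "(int \<times> strand_kind) set"

definition pipes :: "int \<Rightarrow> int \<Rightarrow> tiling \<Rightarrow> pipe set" where
  "pipes a n D = (\<lambda>x. {y. (joined a n D)\<^sup>*\<^sup>* x y}) ` strands a n D"

definition pipe_edges :: "pipe \<Rightarrow> edge set" where
  "pipe_edges p = (\<Union>x\<in>p. strand_edges x)"

definition cross_at :: "tiling \<Rightarrow> pipe \<Rightarrow> pipe \<Rightarrow> int \<Rightarrow> bool" where
  "cross_at D p q c \<longleftrightarrow> D c = Cross \<and>
      (((c, SV) \<in> p \<and> (c, SH) \<in> q) \<or> ((c, SH) \<in> p \<and> (c, SV) \<in> q))"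

definition enters :: "int \<Rightarrow> int \<Rightarrow> pipe \<Rightarrow> bool" where
  "enters a n p \<longleftrightarrow> VE (n + 1) \<in> pipe_edges p \<or> (\<exists>c\<in>{a..n}. TE c \<in> pipe_edges p)"

definition exits :: "int \<Rightarrow> int \<Rightarrow> pipe \<Rightarrow> bool" where
  "exits a n p \<longleftrightarrow> VE a \<in> pipe_edges p \<or> (\<exists>c\<in>{a..n}. BE c \<in> pipe_edges p)"

definition is_BPD :: "int \<Rightarrow> int \<Rightarrow> tiling \<Rightarrow> bool" where
  "is_BPD a n D \<longleftrightarrow> consistent a n D
     \<and> (\<forall>p\<in>pipes a n D. \<forall>q\<in>pipes a n D. p \<noteq> q \<longrightarrow>
            card {c \<in> {a..n}. cross_at D p q c} \<le> 1)
     \<and> (\<forall>p\<in>pipes a n D. enters a n p \<and> exits a n p)"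

definition valid_labeling :: "int \<Rightarrow> int \<Rightarrow> tiling \<Rightarrow> (pipe \<Rightarrow> int) \<Rightarrow> bool" where
  "valid_labeling a n D L \<longleftrightarrow> inj_on L (pipes a n D)
     \<and> (\<forall>c\<in>{a..n}. D c = Cross \<longrightarrow>
          (\<forall>p\<in>pipes a n D. \<forall>q\<in>pipes a n D. (c, SV) \<in> p \<longrightarrow> (c, SH) \<in> q \<longrightarrow> L p < L q))"

text \<open>A pipe crosses edge e exactly when the boundary value there is non-empty,
  and then carries that label.  None encodes the empty value.\<close>
definition edge_cond :: "int \<Rightarrow> int \<Rightarrow> tiling \<Rightarrow> (pipe \<Rightarrow> int) \<Rightarrow> edge \<Rightarrow> int option \<Rightarrow> bool" where
  "edge_cond a n D L e g \<longleftrightarrow>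
     ((\<exists>p\<in>pipes a n D. e \<in> pipe_edges p) \<longleftrightarrow> g \<noteq> None)
     \<and> (\<forall>p\<in>pipes a n D. e \<in> pipe_edges p \<longrightarrow> g = Some (L p))"

text \<open>Boundary condition gamma = (gN, gE, gS, gW); gE and gW are the values at the single row 1.\<close>
definition satisfies ::
  "int \<Rightarrow> int \<Rightarrow> tiling \<Rightarrow> (int \<Rightarrow> int option) \<Rightarrow> int option \<Rightarrow> (int \<Rightarrow> int option) \<Rightarrow> int option \<Rightarrow> bool" where
  "satisfies a n D gN gE gS gW \<longleftrightarrow>
     (\<exists>L. valid_labeling a n D L
        \<and> edge_cond a n D L (VE (n + 1)) gE
        \<and> edge_cond a n D L (VE a) gW
        \<and> (\<forall>c\<in>{a..n}. edge_cond a n D L (TE c) (gN c))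
        \<and> (\<forall>c\<in>{a..n}. edge_cond a n D L (BE c) (gS c)))"

end

(* The boundary condition says that the pipe labelled l (for l in [a,k]) enters the row at
   column w l and leaves it at column u l.  In a one-row BPD such a pipe is a single vertical
   tile when u l = w l, and otherwise an r-elbow at u l, a horizontal run and a j-elbow at w l;
   two pipes may only meet where a horizontal run crosses a vertical pipe of smaller label.
   So a BPD exists iff the spans [u l, w l] are admissible in this sense, and it is then unique.

   On the permutation side, the first values v(i) of a k-chain increase, so each small value
   u l climbs monotonically to w l and every position it passes must already be occupied by a
   fixed point of smaller label; this yields admissible spans.  Conversely, admissible spans are
   realised by repeatedly raising the leftmost nontrivial span start to the next value not taken
   by u on [a,k].  The columns covered by no span are then exactly fix_{(k,n]}(u,w). *)

theory Submission
  imports Defs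
begin

section \<open>Permutations of an interval and their length\<close>

lemma Sperm_inj: "u \<in> Sperm a n \<Longrightarrow> inj u"
  unfolding Sperm_def bij_def by blast

lemma Sperm_fixes: "u \<in> Sperm a n \<Longrightarrow> t \<notin> {a..n} \<Longrightarrow> u t = t"
  unfolding Sperm_def by blast

lemma Sperm_mono: "a' \<le> a \<Longrightarrow> n \<le> n' \<Longrightarrow> Sperm a n \<subseteq> Sperm a' n'"
  unfolding Sperm_def by auto

lemma Sperm_image:
  assumes "u \<in> Sperm a n"
  shows "u ` {a..n} = {a..n}"
proof -
  have "u ` (- {a..n}) = - {a..n}"
    using Sperm_fixes[OF assms] by (simp add: image_cong)
  then show ?thesis
    using bij_image_Compl_eq[of u "{a..n}"] assms unfolding Sperm_def by auto
qed

lemma Sperm_in: "u \<in> Sperm a n \<Longrightarrow> t \<in> {a..n} \<Longrightarrow> u t \<in> {a..n}"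
  using Sperm_image by blast

lemma Sperm_comp_transpose:
  assumes "u \<in> Sperm a n" "i \<in> {a..n}" "j \<in> {a..n}"
  shows "u \<circ> transpose i j \<in> Sperm a n"
  using assms unfolding Sperm_def by (auto simp: bij_comp transpose_def)

lemma Sperm_image_upper:
  assumes "u \<in> Sperm a n" "a \<le> k" "k \<le> n"
  shows "u ` {k<..n} = {a..n} - u ` {a..k}"
proof -
  have "{a..n} = {a..k} \<union> {k<..n}" using assms by auto
  then have "u ` {a..k} \<union> u ` {k<..n} = {a..n}"
    using Sperm_image[OF assms(1)] by (metis image_Un)
  moreover have "u ` {a..k} \<inter> u ` {k<..n} = {}"
    using Sperm_inj[OF assms(1)] by (auto simp: inj_eq)
  ultimately show ?thesis by blast
qed

lemma Sperm_inversions_subset: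
  assumes "v \<in> Sperm a n"
  shows "{(i, j). i < j \<and> v j < v i} \<subseteq> {a..n} \<times> {a..n}"
proof clarify
  fix i j assume ij: "i < j" "v j < v i"
  have out: "x \<notin> {a..n} \<Longrightarrow> v x = x" and inside: "x \<in> {a..n} \<Longrightarrow> a \<le> v x \<and> v x \<le> n" for x
    using Sperm_fixes[OF assms] Sperm_in[OF assms] by auto
  show "i \<in> {a..n} \<and> j \<in> {a..n}"
  proof (cases "i \<in> {a..n}"; cases "j \<in> {a..n}")
    assume "i \<notin> {a..n}" "j \<notin> {a..n}"
    then show ?thesis using out[of i] out[of j] ij by simp
  next
    assume "i \<notin> {a..n}" "j \<in> {a..n}"
    then show ?thesis using out[of i] inside[of j] ij by auto
  next
    assume "i \<in> {a..n}" "j \<notin> {a..n}"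
    then show ?thesis using inside[of i] out[of j] ij by auto
  qed simp
qed

lemma perm_length_eq_sum:
  assumes "v \<in> Sperm a n"
  shows "perm_length v = (\<Sum>p\<in>{a..n}. \<Sum>q\<in>{a..n}. of_bool (p < q \<and> v q < v p))"
proof -
  have "{(i, j). i < j \<and> v j < v i} = {x \<in> {a..n} \<times> {a..n}. fst x < snd x \<and> v (snd x) < v (fst x)}"
    using Sperm_inversions_subset[OF assms] by auto
  then have "perm_length v = (\<Sum>x\<in>{a..n} \<times> {a..n}. of_bool (fst x < snd x \<and> v (snd x) < v (fst x)))"
    unfolding perm_length_def by (simp add: Int_def)
  then show ?thesis by (simp only: sum.cartesian_product split_def)
qed

lemma sum_pairs_split:
  fixes F :: "'a \<Rightarrow> 'a \<Rightarrow> 'b::comm_monoid_add"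
  assumes "finite S" "i \<in> S" "j \<in> S" "i \<noteq> j"
  shows "(\<Sum>p\<in>S. \<Sum>q\<in>S. F p q) =
    F i i + F i j + F j i + F j j + (\<Sum>x\<in>S - {i, j}. F i x + F j x + F x i + F x j)
      + (\<Sum>p\<in>S - {i, j}. \<Sum>q\<in>S - {i, j}. F p q)"
proof -
  have split: "(\<Sum>p\<in>S. G p) = G i + G j + (\<Sum>p\<in>S - {i, j}. G p)" for G :: "'a \<Rightarrow> 'b"
  proof -
    have "(\<Sum>p\<in>S. G p) = G i + (\<Sum>p\<in>S - {i}. G p)" using assms by (intro sum.remove)
    also have "(\<Sum>p\<in>S - {i}. G p) = G j + (\<Sum>p\<in>S - {i} - {j}. G p)"
      using assms by (intro sum.remove) auto
    also have "S - {i} - {j} = S - {i, j}" by auto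
    finally show ?thesis by (simp add: add.assoc)
  qed
  have "(\<Sum>p\<in>S. \<Sum>q\<in>S. F p q) = (\<Sum>p\<in>S. F p i + F p j + (\<Sum>q\<in>S - {i, j}. F p q))"
    using split by simp
  also have "\<dots> = (F i i + F i j + (\<Sum>q\<in>S - {i, j}. F i q))
      + (F j i + F j j + (\<Sum>q\<in>S - {i, j}. F j q))
      + (\<Sum>p\<in>S - {i, j}. F p i + F p j + (\<Sum>q\<in>S - {i, j}. F p q))"
    by (rule split)
  also have "\<dots> = F i i + F i j + F j i + F j j + (\<Sum>x\<in>S - {i, j}. F i x + F j x + F x i + F x j)
      + (\<Sum>p\<in>S - {i, j}. \<Sum>q\<in>S - {i, j}. F p q)"
    by (simp add: sum.distrib ac_simps)
  finally show ?thesis .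
qed

lemma perm_length_comp_transpose:
  assumes v: "v \<in> Sperm a n" and ij: "i < j" and vij: "v i < v j"
  shows "perm_length (v \<circ> transpose i j) =
    perm_length v + 1 + 2 * card {p. i < p \<and> p < j \<and> v i < v p \<and> v p < v j}"
proof -
  define A B where "A = min a i" and "B = max n j"
  let ?v' = "v \<circ> transpose i j"
  let ?X = "{A..B} - {i, j}"
  let ?inv = "\<lambda>f p q. of_bool (p < q \<and> f q < f p) :: nat"
  let ?between = "\<lambda>x. of_bool (i < x \<and> x < j \<and> v i < v x \<and> v x < v j) :: nat"
  have vAB: "v \<in> Sperm A B" using Sperm_mono[of A a n B] v unfolding A_def B_def by auto
  have ijAB: "i \<in> {A..B}" "j \<in> {A..B}" "i \<noteq> j" using ij unfolding A_def B_def by auto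
  have v'AB: "?v' \<in> Sperm A B" using Sperm_comp_transpose[OF vAB ijAB(1,2)] .
  have injv: "inj v" using Sperm_inj[OF v] .
  have inner: "(\<Sum>p\<in>?X. \<Sum>q\<in>?X. ?inv ?v' p q) = (\<Sum>p\<in>?X. \<Sum>q\<in>?X. ?inv v p q)"
    by (intro sum.cong refl) (auto simp: transpose_def)
  have cross: "?inv ?v' i x + ?inv ?v' j x + ?inv ?v' x i + ?inv ?v' x j =
      ?inv v i x + ?inv v j x + ?inv v x i + ?inv v x j + 2 * ?between x" if "x \<in> ?X" for x
  proof -
    have "x \<noteq> i" "x \<noteq> j" "v x \<noteq> v i" "v x \<noteq> v j" using that injv by (auto dest: injD)
    then show ?thesis using vij ij by (auto simp: transpose_def)
  qed
  have "(\<Sum>x\<in>?X. ?between x) = card {x\<in>?X. i < x \<and> x < j \<and> v i < v x \<and> v x < v j}"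
    by (simp add: Int_def)
  also have "{x\<in>?X. i < x \<and> x < j \<and> v i < v x \<and> v x < v j} = {p. i < p \<and> p < j \<and> v i < v p \<and> v p < v j}"
    using ijAB by auto
  finally have count: "(\<Sum>x\<in>?X. ?between x) = card {p. i < p \<and> p < j \<and> v i < v p \<and> v p < v j}" .
  have ends: "?inv ?v' i i = 0" "?inv v i i = 0" "?inv ?v' j j = 0" "?inv v j j = 0"
     "?inv ?v' j i = 0" "?inv v j i = 0" "?inv v i j = 0" "?inv ?v' i j = 1"
    using ij vij by (auto simp: transpose_def)
  have "(\<Sum>x\<in>?X. ?inv ?v' i x + ?inv ?v' j x + ?inv ?v' x i + ?inv ?v' x j) =
      (\<Sum>x\<in>?X. ?inv v i x + ?inv v j x + ?inv v x i + ?inv v x j) + 2 * (\<Sum>x\<in>?X. ?between x)"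
    by (subst sum.cong[OF refl cross]) (simp_all only: sum.distrib sum_distrib_left)
  then show ?thesis
    apply (unfold perm_length_eq_sum[OF vAB] perm_length_eq_sum[OF v'AB]
      sum_pairs_split[OF finite_atLeastAtMost ijAB] inner ends count)
    by (simp only: add_0_left add_0_right ac_simps)
qed

lemma perm_length_comp_transpose_Suc_iff:
  assumes v: "v \<in> Sperm a n" and ij: "i < j"
  shows "perm_length (v \<circ> transpose i j) = perm_length v + 1 \<longleftrightarrow>
     v i < v j \<and> (\<forall>p. i < p \<and> p < j \<longrightarrow> \<not> (v i < v p \<and> v p < v j))"
proof (cases "v i < v j")
  case True
  have "finite {p. i < p \<and> p < j \<and> v i < v p \<and> v p < v j}"
    by (rule finite_subset[of _ "{i<..<j}"]) auto
  then show ?thesis using perm_length_comp_transpose[OF v ij True] True by auto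
next
  case False
  then have "v j < v i" using ij Sperm_inj[OF v] by (metis inj_eq linorder_neqE less_irrefl)
  define A B where "A = min a i" and "B = max n j"
  have "v \<circ> transpose i j \<in> Sperm A B"
    using Sperm_mono[of A a n B] v ij by (intro Sperm_comp_transpose) (auto simp: A_def B_def)
  moreover have "(v \<circ> transpose i j) i < (v \<circ> transpose i j) j" using \<open>v j < v i\<close> by simp
  ultimately have "perm_length v \<ge> perm_length (v \<circ> transpose i j) + 1"
    using perm_length_comp_transpose[of "v \<circ> transpose i j" A B i j] ij
    by (simp add: comp_assoc)
  then show ?thesis using False by simp
qed

lemma kcover_iff:
  assumes "v \<in> Sperm a n"
  shows "kcover k v i j v' \<longleftrightarrow> i \<le> k \<and> k < j \<and> v' = v \<circ> transpose i j \<and> v i < v j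
    \<and> (\<forall>p. i < p \<and> p < j \<longrightarrow> \<not> (v i < v p \<and> v p < v j))"
proof (cases "i < j")
  case True
  then show ?thesis
    unfolding kcover_def using perm_length_comp_transpose_Suc_iff[OF assms True] by auto
qed (auto simp: kcover_def)

lemma card_greater_image_antimono:
  fixes f :: "int \<Rightarrow> int"
  assumes "inj f" "strict_antimono_on {k<..n} f" "p \<in> {k<..n}"
  shows "card {y \<in> f ` {k<..n}. f p < y} = card {k<..<p}"
proof -
  have mono: "x \<in> {k<..n} \<Longrightarrow> y \<in> {k<..n} \<Longrightarrow> x < y \<Longrightarrow> f y < f x" for x y
    using assms(2) unfolding monotone_on_def by blast
  have dec: "q \<in> {k<..n} \<Longrightarrow> f p < f q \<longleftrightarrow> q < p" for q
    using assms(3) mono[of p q] mono[of q p] by (cases q p rule: linorder_cases) auto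
  have "{y \<in> f ` {k<..n}. f p < y} = f ` {k<..<p}"
  proof
    show "{y \<in> f ` {k<..n}. f p < y} \<subseteq> f ` {k<..<p}" using dec by fastforce
    show "f ` {k<..<p} \<subseteq> {y \<in> f ` {k<..n}. f p < y}" using dec assms(3) by auto
  qed
  moreover have "inj_on f {k<..<p}" using assms(1) by (rule inj_on_subset) simp
  ultimately show ?thesis by (simp add: card_image)
qed

lemma Sperm_eq_if_antimono:
  assumes u: "u \<in> Sperm a n" and w: "w \<in> Sperm a n" and "a \<le> k" "k \<le> n"
    and du: "strict_antimono_on {k<..n} u" and dw: "strict_antimono_on {k<..n} w"
    and eq: "\<forall>l\<in>{a..k}. u l = w l"
  shows "u = w"
proof
  fix x
  have same_image: "u ` {k<..n} = w ` {k<..n}"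
  proof -
    have "u ` {a..k} = w ` {a..k}" using eq by (auto simp: image_def)
    then show ?thesis using Sperm_image_upper[OF u] Sperm_image_upper[OF w] assms by simp
  qed
  show "u x = w x"
  proof (cases "x \<in> {k<..n}")
    case x: True
    let ?S = "u ` {k<..n}"
    have same_rank: "card {y \<in> ?S. u x < y} = card {y \<in> ?S. w x < y}"
      using card_greater_image_antimono[OF Sperm_inj[OF u] du x]
        card_greater_image_antimono[OF Sperm_inj[OF w] dw x] same_image by simp
    have smaller: "card {y \<in> ?S. z' < y} < card {y \<in> ?S. z < y}" if "z < z'" "z' \<in> ?S" for z z'
      using that by (intro psubset_card_mono) auto
    have "u x \<in> ?S" "w x \<in> ?S" using x same_image by auto
    then show ?thesis
      using smaller[of "u x" "w x"] smaller[of "w x" "u x"] same_rank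
      by (cases "u x" "w x" rule: linorder_cases) auto
  next
    case False
    then show ?thesis using eq Sperm_fixes[OF u] Sperm_fixes[OF w] by force
  qed
qed

section \<open>Admissible spans\<close>

text \<open>In a BPD satisfying the boundary condition, the pipe labelled l runs along the row from
  column u l to column w l.  Admissibility says that these spans go rightwards and that a
  nontrivial span may only contain the vertical pipes of smaller labels, which cross it.\<close>
definition admissible_spans :: "int \<Rightarrow> int \<Rightarrow> (int \<Rightarrow> int) \<Rightarrow> (int \<Rightarrow> int) \<Rightarrow> bool" where
  "admissible_spans a k u w \<longleftrightarrow> (\<forall>l\<in>{a..k}. u l \<le> w l \<and> (\<forall>l'\<in>{a..k}. l' \<noteq> l \<longrightarrow> u l < w l \<longrightarrow>
      (u l \<le> u l' \<and> u l' \<le> w l \<or> u l \<le> w l' \<and> w l' \<le> w l) \<longrightarrow>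
      (u l' = w l' \<and> l' < l \<and> u l < u l' \<and> u l' < w l)))"

lemma admissible_spansI:
  assumes "\<And>l. l \<in> {a..k} \<Longrightarrow> u l \<le> w l"
    and "\<And>l l'. l \<in> {a..k} \<Longrightarrow> l' \<in> {a..k} \<Longrightarrow> l' \<noteq> l \<Longrightarrow> u l < w l \<Longrightarrow>
      u l \<le> u l' \<and> u l' \<le> w l \<or> u l \<le> w l' \<and> w l' \<le> w l \<Longrightarrow>
      u l' = w l' \<and> l' < l \<and> u l < u l' \<and> u l' < w l"
  shows "admissible_spans a k u w"
  using assms unfolding admissible_spans_def by blast

lemma admissible_spans_le: "admissible_spans a k u w \<Longrightarrow> l \<in> {a..k} \<Longrightarrow> u l \<le> w l"
  unfolding admissible_spans_def by blast

lemma admissible_spans_inside: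
  assumes "admissible_spans a k u w" "l \<in> {a..k}" "l' \<in> {a..k}" "l' \<noteq> l" "u l < w l"
    "u l \<le> u l' \<and> u l' \<le> w l \<or> u l \<le> w l' \<and> w l' \<le> w l"
  shows "u l' = w l' \<and> l' < l \<and> u l < u l' \<and> u l' < w l"
  using assms unfolding admissible_spans_def by blast

lemma admissible_spans_disjoint:
  assumes C: "admissible_spans a k u w" and l: "l \<in> {a..k}" "u l < w l"
    and l': "l' \<in> {a..k}" "u l' < w l'"
    and x: "u l \<le> x" "x \<le> w l" "u l' \<le> x" "x \<le> w l'"
  shows "l = l'"
proof (rule ccontr)
  assume ne: "l \<noteq> l'"
  show False
  proof (cases "u l \<le> u l'")
    case True
    then have "u l' = w l'"
      using admissible_spans_inside[OF C l(1) l'(1) _ l(2)] ne x by force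
    then show False using l' by simp
  next
    case False
    then have "u l = w l"
      using admissible_spans_inside[OF C l'(1) l(1) _ l'(2)] ne x by force
    then show False using l by simp
  qed
qed

section \<open>A k-path forces admissible spans\<close>

text \<open>V t, I t, J t are v_{t+1}, i_{t+1}, j_{t+1} of a k-chain with s steps.\<close>
locale kchain =
  fixes k :: int and s :: nat and V :: "nat \<Rightarrow> int \<Rightarrow> int" and I J :: "nat \<Rightarrow> int"
  assumes cover: "\<And>t. t < s \<Longrightarrow> kcover k (V t) (I t) (J t) (V (Suc t))"
    and lo_increasing: "\<And>t t'. t < t' \<Longrightarrow> t' < s \<Longrightarrow> V t (I t) < V t' (I t')"
    and bounded: "\<exists>a n. V 0 \<in> Sperm a n"
begin

abbreviation "lo t \<equiv> V t (I t)"
abbreviation "hi t \<equiv> V t (J t)"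

lemma chain_Sperm: "t \<le> s \<Longrightarrow> \<exists>a n. V t \<in> Sperm a n"
proof (induction t)
  case 0 then show ?case using bounded by simp
next
  case (Suc t)
  then obtain a n where an: "V t \<in> Sperm a n" by auto
  define a' n' where "a' = min a (I t)" and "n' = max n (J t)"
  have "V t \<in> Sperm a' n'" using an Sperm_mono[of a' a n n'] by (auto simp: a'_def n'_def)
  then have "V t \<circ> transpose (I t) (J t) \<in> Sperm a' n'"
    using cover[of t] Suc.prems
    by (intro Sperm_comp_transpose) (auto simp: a'_def n'_def kcover_def)
  moreover have "V (Suc t) = V t \<circ> transpose (I t) (J t)"
    using cover[of t] Suc.prems unfolding kcover_def by auto
  ultimately show ?case by metis
qed

lemma chain_inj: "t \<le> s \<Longrightarrow> inj (V t)"
  using chain_Sperm Sperm_inj by blast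

lemma chain_step:
  "t < s \<Longrightarrow> V (Suc t) p = (if p = I t then hi t else if p = J t then lo t else V t p)"
  using cover[of t] unfolding kcover_def by (auto simp: transpose_def)

lemma chain_step_cover:
  assumes "t < s"
  shows "I t < J t" "I t \<le> k" "k < J t" "lo t < hi t"
    "\<And>p. I t < p \<Longrightarrow> p < J t \<Longrightarrow> \<not> (lo t < V t p \<and> V t p < hi t)"
proof -
  obtain a n where "V t \<in> Sperm a n" using chain_Sperm assms by (meson less_imp_le_nat)
  then show "I t \<le> k" "k < J t" "lo t < hi t"
    "\<And>p. I t < p \<Longrightarrow> p < J t \<Longrightarrow> \<not> (lo t < V t p \<and> V t p < hi t)"
    using cover[OF assms] kcover_iff by blast+
  then show "I t < J t" by simp
qed

lemma chain_unchanged: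
  assumes "t0 \<le> t" "t \<le> s" "\<And>t'. t0 \<le> t' \<Longrightarrow> t' < t \<Longrightarrow> p \<noteq> I t' \<and> p \<noteq> J t'"
  shows "V t p = V t0 p"
  using assms
proof (induction t)
  case (Suc t)
  then show ?case using chain_step[of t p] by (cases "t0 = Suc t") auto
qed simp

lemma chain_upper_decreasing:
  assumes "k < p" "t0 \<le> t" "t \<le> s"
  shows "V t p \<le> V t0 p"
  using assms
proof (induction t)
  case (Suc t)
  then have "V (Suc t) p \<le> V t p" using chain_step[of t p] chain_step_cover[of t] by auto
  with Suc show ?case by (cases "t0 = Suc t") auto
qed simp

lemma chain_lower_increasing:
  assumes "p \<le> k" "t0 \<le> t" "t \<le> s"
  shows "V t0 p \<le> V t p"
  using assms
proof (induction t)
  case (Suc t)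
  then have "V t p \<le> V (Suc t) p" using chain_step[of t p] chain_step_cover[of t] by auto
  with Suc show ?case by (cases "t0 = Suc t") auto
qed simp

lemma upper_positions_distinct:
  assumes "t < t'" "t' < s"
  shows "J t \<noteq> J t'"
proof
  assume eq: "J t = J t'"
  have ts: "t < s" using assms by simp
  have "V (Suc t) (J t) = lo t" using chain_step[OF ts] chain_step_cover[OF ts] by auto
  moreover have "V t' (J t) \<le> V (Suc t) (J t)"
    using chain_upper_decreasing[of "J t" "Suc t" t'] chain_step_cover[OF ts] assms by auto
  moreover have "lo t < lo t'" using lo_increasing assms by simp
  ultimately show False using eq chain_step_cover(4)[OF assms(2)] by simp
qed

lemma hi_eq_initial:
  assumes "t < s"
  shows "hi t = V 0 (J t)"
proof (rule chain_unchanged)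
  fix t' assume "0 \<le> t'" "t' < t"
  then show "J t \<noteq> I t' \<and> J t \<noteq> J t'"
    using chain_step_cover[of t] chain_step_cover[of t'] upper_positions_distinct[of t' t] assms
    by fastforce
qed (use assms in auto)

lemma final_at_upper_position:
  assumes "t < s"
  shows "V s (J t) = lo t"
proof -
  have "V s (J t) = V (Suc t) (J t)"
  proof (rule chain_unchanged)
    fix t' assume "Suc t \<le> t'" "t' < s"
    then show "J t \<noteq> I t' \<and> J t \<noteq> J t'"
      using chain_step_cover[of t] chain_step_cover[of t'] upper_positions_distinct[of t t'] assms
      by fastforce
  qed (use assms in auto)
  also have "\<dots> = lo t" using chain_step[OF assms] chain_step_cover[OF assms] by auto
  finally show ?thesis .
qed

lemma lower_passes_through:
  assumes "p \<le> k" "t \<le> s" "V 0 p \<le> x" "x < V t p"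
  shows "\<exists>t'<t. I t' = p \<and> lo t' \<le> x \<and> x < hi t'"
  using assms
proof (induction t)
  case (Suc t)
  then have ts: "t < s" by simp
  show ?case
  proof (cases "I t = p \<and> V t p \<le> x")
    case True
    then show ?thesis using chain_step[OF ts, of p] Suc.prems by (intro exI[of _ t]) auto
  next
    case False
    then have "x < V t p"
      using chain_step[OF ts, of p] chain_step_cover[OF ts] Suc.prems by (auto split: if_splits)
    then obtain t' where "t' < t" "I t' = p \<and> lo t' \<le> x \<and> x < hi t'"
      using Suc.IH Suc.prems ts by auto
    then show ?thesis by (intro exI[of _ t']) auto
  qed
qed simp

lemma lower_value_cases:
  assumes "p \<le> k" "t \<le> s"
  shows "V t p = V 0 p \<or> (\<exists>t'<t. I t' = p \<and> V t p = hi t')"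
  using assms
proof (induction t)
  case (Suc t)
  then have ts: "t < s" by simp
  show ?case
  proof (cases "I t = p")
    case False
    then have "V (Suc t) p = V t p" using chain_step[OF ts, of p] chain_step_cover[OF ts] Suc.prems by auto
    then show ?thesis using Suc by fastforce
  qed (use chain_step[OF ts, of p] in auto)
qed simp

lemma first_move:
  assumes "\<exists>t<s. I t = p" "p \<le> k"
  obtains t1 where "t1 < s" "I t1 = p" "lo t1 = V 0 p"
proof -
  define t1 where "t1 = (LEAST t. t < s \<and> I t = p)"
  have h: "t1 < s \<and> I t1 = p" unfolding t1_def using assms(1) by (rule LeastI_ex)
  have "V t1 p = V 0 p"
  proof (rule chain_unchanged)
    fix t' assume "0 \<le> t'" "t' < t1"
    then have "I t' \<noteq> p" using h not_less_Least t1_def by fastforce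
    moreover have "J t' \<noteq> p" using chain_step_cover(3)[of t'] \<open>t' < t1\<close> h assms(2) by auto
    ultimately show "p \<noteq> I t' \<and> p \<noteq> J t'" by auto
  qed (use h in auto)
  then show ?thesis using that h by auto
qed

lemma never_moved:
  assumes "\<not> (\<exists>t<s. I t = p)" "p \<le> k" "t \<le> s"
  shows "V t p = V 0 p"
proof (rule chain_unchanged)
  fix t' assume "0 \<le> t'" "t' < t"
  then have "t' < s" using assms by simp
  then show "p \<noteq> I t' \<and> p \<noteq> J t'" using assms(1,2) chain_step_cover(3)[of t'] by auto
qed (use assms in auto)

end

locale kchain_decreasing = kchain +
  fixes a n :: int
  assumes initial: "V 0 \<in> Sperm a n" and final: "V s \<in> Sperm a n"
    and initial_dec: "strict_antimono_on {k<..n} (V 0)"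
    and final_dec: "strict_antimono_on {k<..n} (V s)"
begin

lemma upper_position_le:
  assumes "t < s"
  shows "J t \<le> n"
proof (rule ccontr)
  assume "\<not> J t \<le> n"
  then have "V s (J t) = J t" "V 0 (J t) = J t"
    using Sperm_fixes[OF initial] Sperm_fixes[OF final] by auto
  then show False
    using final_at_upper_position[OF assms] hi_eq_initial[OF assms] chain_step_cover(4)[OF assms]
    by simp
qed

lemma upper_positions_decreasing:
  assumes "t < t'" "t' < s"
  shows "J t' < J t" "hi t < hi t'"
proof -
  have ts: "t < s" using assms by simp
  have J: "J t \<in> {k<..n}" "J t' \<in> {k<..n}"
    using chain_step_cover(3) upper_position_le ts assms(2) by auto
  have "V s (J t) < V s (J t')"
    using lo_increasing[OF assms] final_at_upper_position[OF ts] final_at_upper_position[OF assms(2)]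
    by simp
  show "J t' < J t"
  proof (rule ccontr)
    assume "\<not> J t' < J t"
    then have "J t < J t'" using upper_positions_distinct[OF assms] by simp
    then have "V s (J t') < V s (J t)" using final_dec J unfolding monotone_on_def by blast
    then show False using \<open>V s (J t) < V s (J t')\<close> by simp
  qed
  then have "V 0 (J t) < V 0 (J t')" using initial_dec J unfolding monotone_on_def by blast
  then show "hi t < hi t'" using hi_eq_initial[OF ts] hi_eq_initial[OF assms(2)] by simp
qed

lemma consecutive_steps:
  assumes "Suc t < s"
  shows "(I (Suc t) = I t \<and> lo (Suc t) = hi t) \<or> (I (Suc t) \<noteq> I t \<and> hi t < lo (Suc t))"
proof (cases "I (Suc t) = I t")
  case True
  then show ?thesis using chain_step[of t "I t"] assms by simp
next
  case False
  have ts: "t < s" using assms by simp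
  let ?l = "I t" and ?l' = "I (Suc t)"
  have sf: "?l \<le> k" "k < J t" "?l' \<le> k" "k < J (Suc t)"
    using chain_step_cover[OF ts] chain_step_cover[OF assms] by auto
  have lo1: "lo (Suc t) = V t ?l'" using chain_step[OF ts, of ?l'] False sf by auto
  have hi1: "V (Suc t) ?l = hi t" using chain_step[OF ts, of ?l] by simp
  have "inj (V (Suc t))" using chain_inj assms by simp
  then have "lo (Suc t) \<noteq> hi t" using False hi1 by (metis injD)
  moreover have "\<not> lo (Suc t) < hi t"
  proof
    assume lt: "lo (Suc t) < hi t"
    have "lo t < lo (Suc t)" using lo_increasing[of t "Suc t"] assms by simp
    then have "\<not> (?l < ?l' \<and> ?l' < J t)" using chain_step_cover(5)[OF ts, of ?l'] lo1 lt by auto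
    then have "?l' < ?l" using sf False by auto
    moreover have "hi t < hi (Suc t)" using upper_positions_decreasing[of t "Suc t"] assms by simp
    ultimately show False using chain_step_cover(5)[OF assms, of ?l] hi1 lt sf by auto
  qed
  ultimately show ?thesis using False by auto
qed

lemma hi_le_lo:
  assumes "t < t'" "t' < s"
  shows "hi t \<le> lo t' \<and> (hi t = lo t' \<longrightarrow> t' = Suc t \<and> I t' = I t)"
  using assms
proof (induction t')
  case (Suc t')
  show ?case
  proof (cases "t = t'")
    case False
    then have "hi t \<le> lo t'" using Suc by simp
    moreover have "lo t' < hi t'" using chain_step_cover(4)[of t'] Suc.prems by simp
    moreover have "hi t' \<le> lo (Suc t')" using consecutive_steps[of t'] Suc.prems by auto
    ultimately show ?thesis by auto
  qed (use consecutive_steps[of t] Suc.prems in auto)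
qed simp

lemma initial_value_in_span:
  assumes l: "l \<in> {a..k}" and l': "l' \<in> {a..k}" "l' \<noteq> l" and nt: "V 0 l < V s l"
    and x: "V 0 l \<le> V 0 l'" "V 0 l' \<le> V s l"
  shows "V 0 l' = V s l' \<and> l' < l \<and> V 0 l < V 0 l' \<and> V 0 l' < V s l"
proof -
  let ?x = "V 0 l'"
  have lk: "l \<le> k" "l' \<le> k" using l l' by auto
  have "?x \<noteq> V s l"
  proof
    assume eq: "?x = V s l"
    from lower_value_cases[OF lk(1), of s] nt obtain t' where t': "t' < s" "V s l = hi t'" by auto
    then have "l' = J t'" using eq hi_eq_initial[OF t'(1)] chain_inj[of 0] by (simp add: inj_eq)
    then show False using chain_step_cover(3)[OF t'(1)] lk by simp
  qed
  then have xl: "?x < V s l" using x by simp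
  obtain t where t: "t < s" "I t = l" "lo t \<le> ?x" "?x < hi t"
    using lower_passes_through[OF lk(1), of s ?x] x(1) xl by blast
  show ?thesis
  proof (cases "\<exists>t<s. I t = l'")
    case True
    obtain t1 where t1: "t1 < s" "I t1 = l'" "lo t1 = ?x" using first_move[OF True lk(2)] by blast
    have "t1 \<noteq> t" using t(2) t1(2) l'(2) by metis
    then consider "t1 < t" | "t < t1" by linarith
    then show ?thesis
    proof cases
      case 1
      then show ?thesis
        using hi_le_lo[OF 1 t(1)] chain_step_cover(4)[OF t1(1)] t(3) t1(3) by simp
    next
      case 2
      then show ?thesis using hi_le_lo[OF 2 t1(1)] t(4) t1(3) by simp
    qed
  next
    case False
    have w1: "V s l' = ?x" using never_moved[OF False lk(2), of s] by simp
    have w2: "V t l' = ?x" using never_moved[OF False lk(2), of t] t(1) by simp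
    have "lo t \<noteq> ?x"
      using w2 t(1,2) l'(2) chain_inj[of t] by (metis inj_eq less_imp_le_nat)
    then have "lo t < V t l'" "V t l' < hi t" using t(3,4) w2 by auto
    then have "\<not> (l < l' \<and> l' < J t)" using chain_step_cover(5)[OF t(1), of l'] t(2) by blast
    moreover have "l' < J t" using chain_step_cover(3)[OF t(1)] lk(2) by simp
    ultimately have "l' < l" using l'(2) by linarith
    moreover have "V 0 l \<noteq> ?x" using chain_inj[of 0] l'(2) by (simp add: inj_eq)
    ultimately show ?thesis using w1 x xl by simp
  qed
qed

lemma final_value_in_span:
  assumes l: "l \<in> {a..k}" and l': "l' \<in> {a..k}" "l' \<noteq> l" and nt: "V 0 l < V s l"
    and x: "V 0 l \<le> V s l'" "V s l' \<le> V s l"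
  shows "V 0 l' = V s l' \<and> l' < l \<and> V 0 l < V 0 l' \<and> V 0 l' < V s l"
proof -
  have lk: "l \<le> k" "l' \<le> k" using l l' by auto
  from lower_value_cases[OF lk(2), of s]
  consider "V s l' = V 0 l'" | t2 where "t2 < s" "I t2 = l'" "V s l' = hi t2" by blast
  then show ?thesis
  proof cases
    case 1
    then show ?thesis using initial_value_in_span[OF l l' nt] x by simp
  next
    case 2
    have "V s l' \<noteq> V s l" using chain_inj[of s] l'(2) by (simp add: inj_eq)
    then obtain t where t: "t < s" "I t = l" "lo t \<le> V s l'" "V s l' < hi t"
      using lower_passes_through[OF lk(1), of s "V s l'"] x by fastforce
    have "t2 \<noteq> t" using t(2) 2(2) l'(2) by metis
    then consider "t2 < t" | "t < t2" by linarith
    then show ?thesis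
    proof cases
      case 1
      then have "I t = I t2" using hi_le_lo[OF 1 t(1)] t(3) 2(3) by simp
      then show ?thesis using t(2) 2(2) l'(2) by simp
    next
      case 3: 2
      then show ?thesis
        using hi_le_lo[OF 3 2(1)] chain_step_cover(4)[OF 2(1)] t(4) 2(3) by simp
    qed
  qed
qed

lemma admissible_spans_chain: "admissible_spans a k (V 0) (V s)"
proof (rule admissible_spansI)
  show "V 0 l \<le> V s l" if "l \<in> {a..k}" for l
    using chain_lower_increasing[of l 0 s] that by simp
  show "V 0 l' = V s l' \<and> l' < l \<and> V 0 l < V 0 l' \<and> V 0 l' < V s l"
    if "l \<in> {a..k}" "l' \<in> {a..k}" "l' \<noteq> l" "V 0 l < V s l"
      "V 0 l \<le> V 0 l' \<and> V 0 l' \<le> V s l \<or> V 0 l \<le> V s l' \<and> V s l' \<le> V s l" for l l'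
    using that initial_value_in_span final_value_in_span by blast
qed

end

lemma kpath_imp_admissible_spans:
  assumes "u \<in> Sperm a n" "w \<in> Sperm a n"
    and "strict_antimono_on {k<..n} u" "strict_antimono_on {k<..n} w"
    and "kpath k u w"
  shows "admissible_spans a k u w"
proof -
  obtain vs "is" js where vs: "vs \<noteq> []" "hd vs = u" "last vs = w"
        "\<forall>t < length vs - 1. kcover k (vs ! t) (is ! t) (js ! t) (vs ! (t + 1))"
        "sorted_wrt (<) (map (\<lambda>t. (vs ! t) (is ! t)) [0..<length vs - 1])"
    using assms(5) unfolding kpath_def by blast
  define s where "s = length vs - 1"
  have ends: "vs ! 0 = u" "vs ! s = w"
    using vs(1-3) hd_conv_nth[of vs] last_conv_nth[of vs] unfolding s_def by simp_all
  interpret kchain_decreasing k s "\<lambda>t. vs ! t" "\<lambda>t. is ! t" "\<lambda>t. js ! t" a n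
  proof
    show "\<And>t. t < s \<Longrightarrow> kcover k (vs ! t) (is ! t) (js ! t) (vs ! Suc t)"
      using vs(4) unfolding s_def by simp
    show "\<And>t t'. t < t' \<Longrightarrow> t' < s \<Longrightarrow> (vs ! t) (is ! t) < (vs ! t') (is ! t')"
      using vs(5) unfolding s_def sorted_wrt_iff_nth_less by auto
  qed (use assms ends in auto)
  show ?thesis using admissible_spans_chain ends by simp
qed

section \<open>Admissible spans yield a k-path\<close>

definition kpath_above :: "int \<Rightarrow> int \<Rightarrow> (int \<Rightarrow> int) \<Rightarrow> (int \<Rightarrow> int) \<Rightarrow> bool" where
  "kpath_above k \<theta> u w \<longleftrightarrow>
     (\<exists>vs is js. vs \<noteq> [] \<and> hd vs = u \<and> last vs = w
        \<and> length is = length vs - 1 \<and> length js = length vs - 1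
        \<and> (\<forall>t < length vs - 1. kcover k (vs ! t) (is ! t) (js ! t) (vs ! (t + 1)))
        \<and> sorted_wrt (<) (\<theta> # map (\<lambda>t. (vs ! t) (is ! t)) [0..<length vs - 1]))"

lemma kpath_above_imp_kpath: "kpath_above k \<theta> u w \<Longrightarrow> kpath k u w"
  unfolding kpath_above_def kpath_def by auto

lemma kpath_above_refl: "kpath_above k \<theta> w w"
  unfolding kpath_above_def by (rule exI[of _ "[w]"]) simp

lemma kpath_above_Cons:
  assumes cover: "kcover k u i j v" and "\<theta> < u i" and "kpath_above k (u i) v w"
  shows "kpath_above k \<theta> u w"
proof -
  obtain vs "is" js where vs: "vs \<noteq> []" "hd vs = v" "last vs = w"
      "length is = length vs - 1" "length js = length vs - 1"
      "\<forall>t < length vs - 1. kcover k (vs ! t) (is ! t) (js ! t) (vs ! (t + 1))"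
      "sorted_wrt (<) (u i # map (\<lambda>t. (vs ! t) (is ! t)) [0..<length vs - 1])"
    using assms(3) unfolding kpath_above_def by blast
  have "vs ! 0 = v" using vs(1,2) by (simp add: hd_conv_nth)
  then have covers: "\<forall>t < length (u # vs) - 1.
      kcover k ((u # vs) ! t) ((i # is) ! t) ((j # js) ! t) ((u # vs) ! (t + 1))"
  proof (intro allI impI)
    fix t assume "t < length (u # vs) - 1"
    then show "kcover k ((u # vs) ! t) ((i # is) ! t) ((j # js) ! t) ((u # vs) ! (t + 1))"
      using cover vs(6) \<open>vs ! 0 = v\<close> by (cases t) auto
  qed
  have "[0..<length (u # vs) - 1] = 0 # map Suc [0..<length vs - 1]"
    using vs(1) by (simp add: upt_conv_Cons map_Suc_upt del: upt_Suc)
  then have "map (\<lambda>t. ((u # vs) ! t) ((i # is) ! t)) [0..<length (u # vs) - 1]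
      = u i # map (\<lambda>t. (vs ! t) (is ! t)) [0..<length vs - 1]"
    by simp
  moreover have "sorted_wrt (<) (\<theta> # u i # map (\<lambda>t. (vs ! t) (is ! t)) [0..<length vs - 1])"
    using vs(7) \<open>\<theta> < u i\<close> by (auto intro: less_trans)
  ultimately have "sorted_wrt (<) (\<theta> # map (\<lambda>t. ((u # vs) ! t) ((i # is) ! t)) [0..<length (u # vs) - 1])"
    by simp
  then show ?thesis
    unfolding kpath_above_def using covers vs(1-5)
    by (intro exI[of _ "u # vs"] exI[of _ "i # is"] exI[of _ "j # js"]) auto
qed

definition uncovered :: "int \<Rightarrow> int \<Rightarrow> int \<Rightarrow> (int \<Rightarrow> int) \<Rightarrow> (int \<Rightarrow> int) \<Rightarrow> int set" where
  "uncovered a k n u w = {c \<in> {a..n}. c \<notin> u ` {a..k} \<and> (\<forall>l\<in>{a..k}. \<not> (u l < c \<and> c \<le> w l))}"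

definition span_cells :: "int \<Rightarrow> int \<Rightarrow> int \<Rightarrow> (int \<Rightarrow> int) \<Rightarrow> (int \<Rightarrow> int) \<Rightarrow> int set" where
  "span_cells a k n u w = {c \<in> {a..n}. \<exists>l\<in>{a..k}. u l \<le> c \<and> c < w l}"

text \<open>One step of the chain built from admissible spans: l0 is the nontrivial span starting
  leftmost, and u l0 is exchanged with \<beta>, the first value above u l0 not taken by u on [a,k].\<close>
locale exchange_step =
  fixes a k n :: int and u w :: "int \<Rightarrow> int" and l0 j \<beta> :: int
  assumes ak: "a \<le> k" and kn: "k \<le> n" and uS: "u \<in> Sperm a n"
    and u_dec: "strict_antimono_on {k<..n} u" and adm: "admissible_spans a k u w"
    and l0: "l0 \<in> {a..k}" and nt: "u l0 < w l0"
    and leftmost: "\<forall>l\<in>{a..k}. u l < w l \<longrightarrow> u l0 \<le> u l"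
    and j: "k < j" "j \<le> n" "u j = \<beta>"
    and \<beta>: "u l0 < \<beta>" "\<beta> \<le> w l0" "\<beta> \<notin> u ` {a..k}"
    and gap: "\<forall>x. u l0 < x \<and> x < \<beta> \<longrightarrow> x \<in> u ` {a..k}"
begin

definition "u' = u \<circ> transpose l0 j"

lemma l0_lt_j: "l0 < j"
  using l0 j by auto

lemma u'_l0: "u' l0 = \<beta>"
  unfolding u'_def using l0_lt_j j by simp

lemma u'_j: "u' j = u l0"
  unfolding u'_def using l0_lt_j by simp

lemma u'_other: "x \<noteq> l0 \<Longrightarrow> x \<noteq> j \<Longrightarrow> u' x = u x"
  unfolding u'_def by simp

lemma u'_lower: "l \<in> {a..k} \<Longrightarrow> l \<noteq> l0 \<Longrightarrow> u' l = u l"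
  using u'_other j by auto

lemma u'_le: "l \<in> {a..k} \<Longrightarrow> u l \<le> u' l"
  using u'_l0 u'_lower \<beta> by (cases "l = l0") auto

lemma u_inj: "inj u"
  using Sperm_inj[OF uS] .

lemma u'_Sperm: "u' \<in> Sperm a n"
  unfolding u'_def using l0 j ak kn by (intro Sperm_comp_transpose[OF uS]) auto

lemma kcover_u': "kcover k u l0 j u'"
  unfolding kcover_iff[OF uS]
proof (intro conjI allI impI notI)
  show "l0 \<le> k" "k < j" "u' = u \<circ> transpose l0 j" "u l0 < u j" using l0 j \<beta> u'_def by auto
  fix p assume p: "l0 < p \<and> p < j" and v: "u l0 < u p \<and> u p < u j"
  then obtain l' where l': "l' \<in> {a..k}" "u p = u l'" using gap j by blast
  then have "p = l'" using u_inj by (simp add: inj_eq)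
  then have "l' < l0"
    using admissible_spans_inside[OF adm l0 l'(1) _ nt] p v j \<beta> l' by force
  then show False using p \<open>p = l'\<close> by simp
qed

lemma u'_antimono: "strict_antimono_on {k<..n} u'"
  unfolding monotone_on_def
proof (intro ballI impI)
  fix p q assume pq: "p \<in> {k<..n}" "q \<in> {k<..n}" "p < q"
  have u_dec': "u q < u p" using u_dec pq unfolding monotone_on_def by blast
  have "p \<noteq> l0" "q \<noteq> l0" using pq l0 by auto
  show "u' q < u' p"
  proof (cases "p = j")
    case True
    have "u q \<notin> u ` {a..k}" using pq u_inj by (auto simp: inj_eq)
    then have "\<not> u l0 < u q" using gap u_dec' True j by auto
    moreover have "u q \<noteq> u l0" using u_inj \<open>q \<noteq> l0\<close> by (simp add: inj_eq)
    ultimately show ?thesis using True pq u'_j u'_other \<open>q \<noteq> l0\<close> by simp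
  next
    case False
    then show ?thesis
      using u_dec' \<beta> j u'_j u'_other \<open>p \<noteq> l0\<close> \<open>q \<noteq> l0\<close> by (cases "q = j") auto
  qed
qed

lemma u'_admissible: "admissible_spans a k u' w"
proof (rule admissible_spansI)
  show "u' l \<le> w l" if "l \<in> {a..k}" for l
    using that admissible_spans_le[OF adm that] u'_l0 \<beta> u'_lower by (cases "l = l0") auto
  fix l l' assume l: "l \<in> {a..k}" and l': "l' \<in> {a..k}" "l' \<noteq> l" "u' l < w l"
    and h: "u' l \<le> u' l' \<and> u' l' \<le> w l \<or> u' l \<le> w l' \<and> w l' \<le> w l"
  show "u' l' = w l' \<and> l' < l \<and> u' l < u' l' \<and> u' l' < w l"
  proof (cases "l = l0")
    case True
    have ul': "u' l' = u l'" using u'_lower l' True by simp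
    then have "u l0 \<le> u l' \<and> u l' \<le> w l0 \<or> u l0 \<le> w l' \<and> w l' \<le> w l0"
      using h u'_l0 \<beta> True by auto
    then have r: "u l' = w l' \<and> l' < l0 \<and> u l0 < u l' \<and> u l' < w l0"
      using admissible_spans_inside[OF adm l0 l'(1) _ nt] l'(2) True by blast
    moreover have "u l' \<noteq> \<beta>" using \<beta> l'(1) by auto
    ultimately show ?thesis using h u'_l0 ul' True by auto
  next
    case False
    then have ul: "u' l = u l" using u'_lower l by simp
    show ?thesis
    proof (cases "l' = l0")
      case True
      have "u l < w l" using l'(3) ul by simp
      moreover have "u l \<le> \<beta> \<and> \<beta> \<le> w l \<or> u l \<le> w l0 \<and> w l0 \<le> w l"
        using h ul True u'_l0 by auto
      ultimately have "l = l0"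
        using admissible_spans_disjoint[OF adm l _ l0 nt, of \<beta>]
          admissible_spans_disjoint[OF adm l _ l0 nt, of "w l0"] \<beta> by auto
      then show ?thesis using False by simp
    next
      case False
      then show ?thesis
        using admissible_spans_inside[OF adm l l'(1) l'(2)] h ul u'_lower l' by simp
    qed
  qed
qed

lemma u'_moves_above: "\<forall>l\<in>{a..k}. u' l < w l \<longrightarrow> u l0 < u' l"
proof (intro ballI impI)
  fix l assume l: "l \<in> {a..k}" and lt: "u' l < w l"
  show "u l0 < u' l"
  proof (cases "l = l0")
    case False
    then have "u' l = u l" "u l \<noteq> u l0" using u'_lower l u_inj by (auto simp: inj_eq)
    then show ?thesis using leftmost l lt by fastforce
  qed (use u'_l0 \<beta> in simp)
qed

lemma span_cells_decrease: "card (span_cells a k n u' w) < card (span_cells a k n u w)"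
proof (rule psubset_card_mono)
  show "finite (span_cells a k n u w)" unfolding span_cells_def by simp
  have "span_cells a k n u' w \<subseteq> span_cells a k n u w"
    unfolding span_cells_def using u'_le by (blast intro: order_trans)
  moreover have "u l0 \<in> span_cells a k n u w"
    unfolding span_cells_def using Sperm_in[OF uS, of l0] l0 nt kn by auto
  moreover have "u l0 \<notin> span_cells a k n u' w"
  proof
    assume "u l0 \<in> span_cells a k n u' w"
    then obtain l where l: "l \<in> {a..k}" "u' l \<le> u l0" "u l0 < w l" unfolding span_cells_def by auto
    then have "l \<noteq> l0" using u'_l0 \<beta> by auto
    then have "u l \<le> u l0" using l u'_lower by simp
    then have "l = l0"
      using admissible_spans_disjoint[OF adm l(1) _ l0 nt, of "u l0"] l nt by simp
    then show False using \<open>l \<noteq> l0\<close> by simp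
  qed
  ultimately show "span_cells a k n u' w \<subset> span_cells a k n u w" by blast
qed

lemma u'_image_lower: "u' ` {a..k} = insert \<beta> (u ` {a..k} - {u l0})"
proof -
  have "u' ` {a..k} = insert (u' l0) (u' ` ({a..k} - {l0}))" using l0 by blast
  also have "u' ` ({a..k} - {l0}) = u ` ({a..k} - {l0})" using u'_lower by simp
  also have "\<dots> = u ` {a..k} - {u l0}" using u_inj l0 by (auto simp: inj_eq)
  finally show ?thesis using u'_l0 by simp
qed

lemma u_l0_uncovered: "u l0 \<in> uncovered a k n u' w"
  unfolding uncovered_def
proof (intro CollectI conjI ballI notI)
  show "u l0 \<in> {a..n}" using Sperm_in[OF uS, of l0] l0 kn by auto
  show "u l0 \<in> u' ` {a..k} \<Longrightarrow> False" using u'_image_lower \<beta> by auto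
  fix l assume l: "l \<in> {a..k}" and h: "u' l < u l0 \<and> u l0 \<le> w l"
  then have "l \<noteq> l0" using u'_l0 \<beta> by auto
  then have "u l < u l0" using h u'_lower l by simp
  then show False
    using admissible_spans_disjoint[OF adm l _ l0 nt, of "u l0"] h nt \<open>l \<noteq> l0\<close> by simp
qed

lemma w_j_eq:
  assumes "u l0 \<in> fixset {k<..n} u' w"
  shows "w j = u l0"
proof -
  obtain t where t: "t \<in> {k<..n}" "u l0 = u' t" "u' t = w t"
    using assms unfolding fixset_def by blast
  then have "u' t = u' j" using u'_j by simp
  then have "t = j" using Sperm_inj[OF u'_Sperm] by (simp add: inj_eq)
  then show ?thesis using t by simp
qed

lemma fixset_step:
  assumes "w j = u l0"
  shows "fixset {k<..n} u w = fixset {k<..n} u' w - {u l0}"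
proof (intro set_eqI iffI)
  have same: "u' t = u t" if "t \<in> {k<..n}" "t \<noteq> j" for t using that u'_other l0 by auto
  fix x
  {
    assume "x \<in> fixset {k<..n} u w"
    then obtain t where t: "t \<in> {k<..n}" "x = u t" "u t = w t" unfolding fixset_def by auto
    then have "t \<noteq> j" using assms j \<beta> by auto
    moreover have "u t \<noteq> u l0" using t(1) l0 u_inj by (auto simp: inj_eq)
    ultimately have "x = u' t" "u' t = w t" "x \<noteq> u l0" using t same by auto
    then show "x \<in> fixset {k<..n} u' w - {u l0}" using t(1) unfolding fixset_def by blast
  next
    assume "x \<in> fixset {k<..n} u' w - {u l0}"
    then obtain t where t: "t \<in> {k<..n}" "x = u' t" "u' t = w t" "x \<noteq> u l0"
      unfolding fixset_def by auto
    then have "t \<noteq> j" using u'_j by auto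
    then have "x = u t" "u t = w t" using t same by auto
    then show "x \<in> fixset {k<..n} u w" using t(1) unfolding fixset_def by blast
  }
qed

lemma uncovered_step: "uncovered a k n u w = uncovered a k n u' w - {u l0}"
proof -
  have "c \<notin> u ` {a..k} \<and> (\<forall>l\<in>{a..k}. \<not> (u l < c \<and> c \<le> w l)) \<longleftrightarrow>
        c \<notin> u' ` {a..k} \<and> (\<forall>l\<in>{a..k}. \<not> (u' l < c \<and> c \<le> w l))"
    if "c \<noteq> u l0" for c
  proof -
    define R where "R \<longleftrightarrow> (\<forall>l\<in>{a..k} - {l0}. \<not> (u l < c \<and> c \<le> w l))"
    have img: "c \<notin> u' ` {a..k} \<longleftrightarrow> c \<noteq> \<beta> \<and> c \<notin> u ` {a..k}"
      using u'_image_lower that by auto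
    have old: "(\<forall>l\<in>{a..k}. \<not> (u l < c \<and> c \<le> w l)) \<longleftrightarrow> R \<and> \<not> (u l0 < c \<and> c \<le> w l0)"
      unfolding R_def using l0 by blast
    have "(\<forall>l\<in>{a..k}. \<not> (u' l < c \<and> c \<le> w l)) \<longleftrightarrow>
        (\<forall>l\<in>{a..k} - {l0}. \<not> (u' l < c \<and> c \<le> w l)) \<and> \<not> (u' l0 < c \<and> c \<le> w l0)"
      using l0 by blast
    also have "\<dots> \<longleftrightarrow> R \<and> \<not> (\<beta> < c \<and> c \<le> w l0)"
      unfolding R_def u'_l0 using u'_lower by auto
    finally have new: "(\<forall>l\<in>{a..k}. \<not> (u' l < c \<and> c \<le> w l)) \<longleftrightarrow> R \<and> \<not> (\<beta> < c \<and> c \<le> w l0)" .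
    have "c \<notin> u ` {a..k} \<and> \<not> (u l0 < c \<and> c \<le> w l0) \<longleftrightarrow>
        c \<noteq> \<beta> \<and> c \<notin> u ` {a..k} \<and> \<not> (\<beta> < c \<and> c \<le> w l0)"
      using gap[rule_format, of c] \<beta>(1,2) by force
    then show ?thesis unfolding img old new by blast
  qed
  note same = this
  show ?thesis
  proof (intro set_eqI)
    fix c
    show "c \<in> uncovered a k n u w \<longleftrightarrow> c \<in> uncovered a k n u' w - {u l0}"
    proof (cases "c = u l0")
      case True
      then show ?thesis unfolding uncovered_def using l0 by auto
    qed (use same[of c] in \<open>simp add: uncovered_def\<close>)
  qed
qed

end

lemma exchange_step_exists:
  assumes ak: "a \<le> k" and kn: "k \<le> n" and uS: "u \<in> Sperm a n" and wS: "w \<in> Sperm a n"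
    and u_dec: "strict_antimono_on {k<..n} u" and adm: "admissible_spans a k u w"
    and nontrivial: "\<exists>l\<in>{a..k}. u l < w l"
  obtains l0 j \<beta> where "exchange_step a k n u w l0 j \<beta>"
proof -
  define NT where "NT = {l\<in>{a..k}. u l < w l}"
  have "NT \<subseteq> {a..k}" unfolding NT_def by auto
  then have NT: "finite NT" "NT \<noteq> {}"
    using nontrivial finite_subset unfolding NT_def by auto
  have "Min (u ` NT) \<in> u ` NT" using NT by simp
  then obtain l0 where l0: "l0 \<in> NT" "u l0 = Min (u ` NT)" by auto
  then have leftmost: "\<forall>l\<in>{a..k}. u l < w l \<longrightarrow> u l0 \<le> u l" using NT unfolding NT_def by auto
  have l0': "l0 \<in> {a..k}" "u l0 < w l0" using l0 unfolding NT_def by auto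
  define B where "B = {x \<in> {u l0<..w l0}. x \<notin> u ` {a..k}}"
  have "w l0 \<notin> u ` {a..k}"
  proof
    assume "w l0 \<in> u ` {a..k}"
    then obtain l' where l': "l' \<in> {a..k}" "w l0 = u l'" by auto
    then have "u l' < w l0"
      using admissible_spans_inside[OF adm l0'(1) l'(1) _ l0'(2)] l0' by fastforce
    then show False using l' by simp
  qed
  moreover have "B \<subseteq> {u l0<..w l0}" unfolding B_def by blast
  ultimately have B: "finite B" "w l0 \<in> B"
    using l0' finite_subset unfolding B_def by auto
  define \<beta> where "\<beta> = Min B"
  have \<beta>: "u l0 < \<beta>" "\<beta> \<le> w l0" "\<beta> \<notin> u ` {a..k}"
    using Min_in[OF B(1)] B(2) unfolding \<beta>_def B_def by auto
  have gap: "\<forall>x. u l0 < x \<and> x < \<beta> \<longrightarrow> x \<in> u ` {a..k}"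
    using Min_le[OF B(1)] \<beta> unfolding \<beta>_def B_def by fastforce
  have "\<beta> \<in> {a..n}"
    using Sperm_in[OF uS, of l0] Sperm_in[OF wS, of l0] l0' \<beta> kn by auto
  then obtain j where j: "j \<in> {a..n}" "u j = \<beta>" using Sperm_image[OF uS] by (metis imageE)
  then have "k < j" using \<beta>(3) by force
  then have "exchange_step a k n u w l0 j \<beta>"
    using assms l0' leftmost j \<beta> gap by unfold_locales auto
  then show ?thesis using that by blast
qed

lemma admissible_spans_kpath_above:
  assumes ak: "a \<le> k" and kn: "k \<le> n" and wS: "w \<in> Sperm a n"
    and w_dec: "strict_antimono_on {k<..n} w"
  shows "u \<in> Sperm a n \<Longrightarrow> strict_antimono_on {k<..n} u \<Longrightarrow> admissible_spans a k u w \<Longrightarrow>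
      \<forall>l\<in>{a..k}. u l < w l \<longrightarrow> \<theta> < u l \<Longrightarrow>
      kpath_above k \<theta> u w \<and> fixset {k<..n} u w = uncovered a k n u w"
proof (induction "card (span_cells a k n u w)" arbitrary: u \<theta> rule: less_induct)
  case less
  note uS = less.prems(1) and u_dec = less.prems(2) and adm = less.prems(3)
  show ?case
  proof (cases "\<exists>l\<in>{a..k}. u l < w l")
    case False
    then have "u = w"
      using admissible_spans_le[OF adm] Sperm_eq_if_antimono[OF uS wS ak kn u_dec w_dec]
      by force
    moreover have "fixset {k<..n} w w = w ` {k<..n}" unfolding fixset_def by auto
    then have "fixset {k<..n} w w = uncovered a k n w w"
      using Sperm_image_upper[OF wS ak kn] unfolding uncovered_def by auto
    ultimately show ?thesis using kpath_above_refl by simp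
  next
    case True
    then obtain l0 j \<beta> where "exchange_step a k n u w l0 j \<beta>"
      using exchange_step_exists[OF ak kn uS wS u_dec adm] by blast
    then interpret exchange_step a k n u w l0 j \<beta> .
    have IH: "kpath_above k (u l0) u' w" "fixset {k<..n} u' w = uncovered a k n u' w"
      using less.hyps[OF span_cells_decrease u'_Sperm u'_antimono u'_admissible u'_moves_above]
      by auto
    have "kpath_above k \<theta> u w"
      using kpath_above_Cons[OF kcover_u' _ IH(1)] less.prems(4) l0 nt by blast
    moreover have "w j = u l0" using u_l0_uncovered IH(2) by (intro w_j_eq) simp
    then have "fixset {k<..n} u w = uncovered a k n u w"
      using fixset_step uncovered_step IH(2) by simp
    ultimately show ?thesis by simp
  qed
qed

section \<open>Pipes of a tiling of the row\<close>

lemma uses_right_iff: "uses_right t \<longleftrightarrow> t \<in> {Hor, RElb, Cross}"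
  by (cases t) auto

lemma uses_left_iff: "uses_left t \<longleftrightarrow> t \<in> {Hor, JElb, Cross}"
  by (cases t) auto

lemma strands_iff: "(c, s) \<in> strands a n D \<longleftrightarrow> c \<in> {a..n} \<and> s \<in> tile_strands (D c)"
  unfolding strands_def by simp

lemma symp_joined: "symp (joined a n D)"
  unfolding joined_def symp_def by blast

lemma joined_rtranclp_sym: "(joined a n D)\<^sup>*\<^sup>* x y \<Longrightarrow> (joined a n D)\<^sup>*\<^sup>* y x"
  by (rule sympD[OF symp_rtranclp[OF symp_joined]])

definition pipe_of :: "int \<Rightarrow> int \<Rightarrow> tiling \<Rightarrow> int \<times> strand_kind \<Rightarrow> pipe" where
  "pipe_of a n D x = {y. (joined a n D)\<^sup>*\<^sup>* x y}"

lemma pipe_of_in_pipes: "x \<in> strands a n D \<Longrightarrow> pipe_of a n D x \<in> pipes a n D"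
  unfolding pipe_of_def pipes_def by blast

lemma pipe_of_self: "x \<in> pipe_of a n D x"
  unfolding pipe_of_def by simp

lemma pipesE:
  assumes "p \<in> pipes a n D"
  obtains x where "x \<in> strands a n D" "p = pipe_of a n D x"
  using assms unfolding pipes_def pipe_of_def by blast

lemma pipe_subset_strands: "p \<in> pipes a n D \<Longrightarrow> p \<subseteq> strands a n D"
proof (elim pipesE)
  fix x assume "x \<in> strands a n D" "p = pipe_of a n D x"
  moreover have "(joined a n D)\<^sup>*\<^sup>* x y \<Longrightarrow> x \<in> strands a n D \<Longrightarrow> y \<in> strands a n D" for y
    by (induction rule: rtranclp_induct) (auto simp: joined_def)
  ultimately show ?thesis unfolding pipe_of_def by blast
qed

lemma pipe_eq_pipe_of: "p \<in> pipes a n D \<Longrightarrow> y \<in> p \<Longrightarrow> p = pipe_of a n D y"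
proof (elim pipesE)
  fix x assume x: "p = pipe_of a n D x" and "y \<in> p"
  then have xy: "(joined a n D)\<^sup>*\<^sup>* x y" unfolding pipe_of_def by simp
  show "p = pipe_of a n D y"
    unfolding x pipe_of_def
  proof (intro Collect_cong iffI)
    fix z
    show "(joined a n D)\<^sup>*\<^sup>* x z \<Longrightarrow> (joined a n D)\<^sup>*\<^sup>* y z"
      by (rule rtranclp_trans[OF joined_rtranclp_sym[OF xy]])
    show "(joined a n D)\<^sup>*\<^sup>* y z \<Longrightarrow> (joined a n D)\<^sup>*\<^sup>* x z"
      by (rule rtranclp_trans[OF xy])
  qed
qed

lemma pipe_edges_pipe_of: "e \<in> strand_edges x \<Longrightarrow> e \<in> pipe_edges (pipe_of a n D x)"
  unfolding pipe_edges_def using pipe_of_self by (rule UN_I)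

lemma ex_pipe_edge_iff:
  "(\<exists>p\<in>pipes a n D. e \<in> pipe_edges p) \<longleftrightarrow> (\<exists>x\<in>strands a n D. e \<in> strand_edges x)"
proof
  assume "\<exists>p\<in>pipes a n D. e \<in> pipe_edges p"
  then obtain p where p: "p \<in> pipes a n D" "e \<in> pipe_edges p" by blast
  obtain x where "x \<in> p" "e \<in> strand_edges x" using p(2) unfolding pipe_edges_def by blast
  then show "\<exists>x\<in>strands a n D. e \<in> strand_edges x" using pipe_subset_strands[OF p(1)] by blast
next
  assume "\<exists>x\<in>strands a n D. e \<in> strand_edges x"
  then obtain x where "x \<in> strands a n D" "e \<in> strand_edges x" by blast
  then show "\<exists>p\<in>pipes a n D. e \<in> pipe_edges p"
    using pipe_of_in_pipes pipe_edges_pipe_of by blast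
qed

lemma ex_pipe_TE_iff:
  "(\<exists>p\<in>pipes a n D. TE c \<in> pipe_edges p) \<longleftrightarrow> c \<in> {a..n} \<and> D c \<in> {Vert, Cross, JElb}"
proof -
  have "TE c \<in> strand_edges x \<longleftrightarrow> x = (c, SV) \<or> x = (c, SJ)" for x
    by (cases x; cases "snd x") auto
  then show ?thesis unfolding ex_pipe_edge_iff by (cases "D c") (auto simp: strands_iff)
qed

lemma ex_pipe_BE_iff:
  "(\<exists>p\<in>pipes a n D. BE c \<in> pipe_edges p) \<longleftrightarrow> c \<in> {a..n} \<and> D c \<in> {Vert, Cross, RElb}"
proof -
  have "BE c \<in> strand_edges x \<longleftrightarrow> x = (c, SV) \<or> x = (c, SR)" for x
    by (cases x; cases "snd x") auto
  then show ?thesis unfolding ex_pipe_edge_iff by (cases "D c") (auto simp: strands_iff)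
qed

lemma ex_pipe_VE_iff:
  "(\<exists>p\<in>pipes a n D. VE c \<in> pipe_edges p) \<longleftrightarrow>
    (c \<in> {a..n} \<and> uses_left (D c)) \<or> (c - 1 \<in> {a..n} \<and> uses_right (D (c - 1)))"
proof -
  have "VE c \<in> strand_edges x \<longleftrightarrow>
      x = (c, SH) \<or> x = (c, SJ) \<or> x = (c - 1, SH) \<or> x = (c - 1, SR)" for x
    by (cases x; cases "snd x") auto
  moreover have "uses_left t \<longleftrightarrow> SH \<in> tile_strands t \<or> SJ \<in> tile_strands t" for t
    by (cases t) auto
  moreover have "uses_right t \<longleftrightarrow> SH \<in> tile_strands t \<or> SR \<in> tile_strands t" for t
    by (cases t) auto
  moreover have "(\<exists>x\<in>strands a n D. VE c \<in> strand_edges x) \<longleftrightarrow>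
      (c, SH) \<in> strands a n D \<or> (c, SJ) \<in> strands a n D \<or>
      (c - 1, SH) \<in> strands a n D \<or> (c - 1, SR) \<in> strands a n D"
    by (simp only: calculation(1) bex_disj_distrib bex_triv_one_point1)
  ultimately show ?thesis unfolding ex_pipe_edge_iff strands_iff by blast
qed

lemma run_connected:
  assumes x: "x \<in> {a..n}" and y: "y \<le> n" "x < y" and ends: "D x = RElb" "D y = JElb"
    and between: "\<forall>c. x < c \<and> c < y \<longrightarrow> D c \<in> {Hor, Cross}"
  shows "(joined a n D)\<^sup>*\<^sup>* (x, SR) (y, SJ)"
    and "x < c \<Longrightarrow> c < y \<Longrightarrow> (joined a n D)\<^sup>*\<^sup>* (x, SR) (c, SH)"
proof -
  define run where "run c = (if c = x then (c, SR) else if c = y then (c, SJ) else (c, SH))" for c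
  have run_strand: "run c \<in> strands a n D" if "x \<le> c" "c \<le> y" for c
    using that x y ends between[rule_format, of c] by (auto simp: run_def strands_iff)
  have run_joined: "joined a n D (run c) (run (c + 1))" if "x \<le> c" "c < y" for c
  proof -
    have "VE (c + 1) \<in> strand_edges (run c) \<inter> strand_edges (run (c + 1))"
      using that by (auto simp: run_def)
    moreover have "run c \<noteq> run (c + 1)" by (simp add: run_def)
    ultimately show ?thesis unfolding joined_def using run_strand that by auto
  qed
  have reach: "c \<le> y \<longrightarrow> (joined a n D)\<^sup>*\<^sup>* (run x) (run c)" if "x \<le> c" for c
    using that
  proof (induction c rule: int_ge_induct)
    case (step c)
    then show ?case using run_joined[of c] by (auto intro: rtranclp.rtrancl_into_rtrancl)
  qed simp
  have "run x = (x, SR)" "run y = (y, SJ)" using y by (auto simp: run_def)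
  then show "(joined a n D)\<^sup>*\<^sup>* (x, SR) (y, SJ)" using reach[of y] y by simp
  show "(joined a n D)\<^sup>*\<^sup>* (x, SR) (c, SH)" if "x < c" "c < y"
    using reach[of c] that \<open>run x = (x, SR)\<close> by (simp add: run_def)
qed

section \<open>The canonical BPD\<close>

definition canonical_tiling :: "int \<Rightarrow> int \<Rightarrow> (int \<Rightarrow> int) \<Rightarrow> (int \<Rightarrow> int) \<Rightarrow> tiling" where
  "canonical_tiling a k u w c = (if \<exists>l\<in>{a..k}. u l < w l \<and> c = u l then RElb
     else if \<exists>l\<in>{a..k}. u l < w l \<and> c = w l then JElb
     else if \<exists>l\<in>{a..k}. u l < c \<and> c < w l then (if c \<in> w ` {a..k} then Cross else Hor)
     else if c \<in> w ` {a..k} then Vert else Blank)"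

text \<open>on_pipe u w l x: the strand x of the canonical tiling belongs to the pipe labelled l.\<close>
fun on_pipe :: "(int \<Rightarrow> int) \<Rightarrow> (int \<Rightarrow> int) \<Rightarrow> int \<Rightarrow> int \<times> strand_kind \<Rightarrow> bool" where
  "on_pipe u w l (c, SV) = (u l = c \<and> w l = c)"
| "on_pipe u w l (c, SR) = (u l = c \<and> u l < w l)"
| "on_pipe u w l (c, SJ) = (w l = c \<and> u l < w l)"
| "on_pipe u w l (c, SH) = (u l < c \<and> c < w l)"

lemma on_pipe_edges:
  assumes "on_pipe u w l x"
  shows "VE e \<in> strand_edges x \<Longrightarrow> u l < e \<and> e \<le> w l"
    and "TE e \<in> strand_edges x \<Longrightarrow> w l = e"
    and "BE e \<in> strand_edges x \<Longrightarrow> u l = e"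
  using assms by (cases x; cases "snd x"; auto)+

locale row_permutations =
  fixes a k n :: int and u w :: "int \<Rightarrow> int"
  assumes k_le_n: "k \<le> n" and uS: "u \<in> Sperm a n" and wS: "w \<in> Sperm a n"
begin

lemma u_in: "l \<in> {a..k} \<Longrightarrow> u l \<in> {a..n}"
  using Sperm_in[OF uS] k_le_n by auto

lemma w_in: "l \<in> {a..k} \<Longrightarrow> w l \<in> {a..n}"
  using Sperm_in[OF wS] k_le_n by auto

lemma u_eq_iff: "u l = u l' \<longleftrightarrow> l = l'"
  using Sperm_inj[OF uS] by (auto dest: injD)

lemma w_eq_iff: "w l = w l' \<longleftrightarrow> l = l'"
  using Sperm_inj[OF wS] by (auto dest: injD)

end

locale canonical = row_permutations +
  assumes adm: "admissible_spans a k u w"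
begin

abbreviation "T \<equiv> canonical_tiling a k u w"

lemma not_endpoint:
  assumes l: "l \<in> {a..k}" "u l < w l" and l': "l' \<in> {a..k}" "u l' < w l'"
  shows "u l \<le> c \<Longrightarrow> c \<le> w l \<Longrightarrow> c = u l' \<Longrightarrow> l = l'"
    and "u l \<le> c \<Longrightarrow> c \<le> w l \<Longrightarrow> c = w l' \<Longrightarrow> l = l'"
  using admissible_spans_disjoint[OF adm l l', of c] l' by auto

lemma T_RElb_iff: "T c = RElb \<longleftrightarrow> (\<exists>l\<in>{a..k}. on_pipe u w l (c, SR))"
  unfolding canonical_tiling_def by auto

lemma T_JElb_iff: "T c = JElb \<longleftrightarrow> (\<exists>l\<in>{a..k}. on_pipe u w l (c, SJ))"
proof
  assume "\<exists>l\<in>{a..k}. on_pipe u w l (c, SJ)"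
  then obtain l where l: "l \<in> {a..k}" "w l = c" "u l < w l" by auto
  then have "\<not> (\<exists>l'\<in>{a..k}. u l' < w l' \<and> c = u l')"
    using not_endpoint(1)[OF l(1,3)] by force
  then show "T c = JElb" unfolding canonical_tiling_def using l by auto
qed (auto simp: canonical_tiling_def split: if_splits)

lemma T_horizontal_iff: "T c \<in> {Hor, Cross} \<longleftrightarrow> (\<exists>l\<in>{a..k}. on_pipe u w l (c, SH))"
proof
  assume "\<exists>l\<in>{a..k}. on_pipe u w l (c, SH)"
  then obtain l where l: "l \<in> {a..k}" "u l < c" "c < w l" by auto
  then have "\<not> (\<exists>l'\<in>{a..k}. u l' < w l' \<and> (c = u l' \<or> c = w l'))"
    using not_endpoint[of l] by force
  then show "T c \<in> {Hor, Cross}" unfolding canonical_tiling_def using l by auto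
qed (auto simp: canonical_tiling_def split: if_splits)

lemma T_vertical_iff: "T c \<in> {Vert, Cross} \<longleftrightarrow> (\<exists>l\<in>{a..k}. on_pipe u w l (c, SV))"
proof
  assume "T c \<in> {Vert, Cross}"
  then have "c \<in> w ` {a..k}" "\<not> (\<exists>l'\<in>{a..k}. u l' < w l' \<and> c = w l')"
    unfolding canonical_tiling_def by (auto split: if_splits)
  then obtain l where l: "l \<in> {a..k}" "c = w l" "\<not> u l < w l" by auto
  then show "\<exists>l\<in>{a..k}. on_pipe u w l (c, SV)"
    using admissible_spans_le[OF adm l(1)] by auto
next
  assume "\<exists>l\<in>{a..k}. on_pipe u w l (c, SV)"
  then obtain l where l: "l \<in> {a..k}" "u l = c" "w l = c" by auto
  then have "\<not> (\<exists>l'\<in>{a..k}. u l' < w l' \<and> (c = u l' \<or> c = w l'))"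
    using u_eq_iff w_eq_iff by force
  moreover have "c \<in> w ` {a..k}" using l by (metis imageI)
  ultimately show "T c \<in> {Vert, Cross}" unfolding canonical_tiling_def by auto
qed

lemma strands_T: "(c, s) \<in> strands a n T \<longleftrightarrow> c \<in> {a..n} \<and> (\<exists>l\<in>{a..k}. on_pipe u w l (c, s))"
proof -
  have "s \<in> tile_strands (T c) \<longleftrightarrow> (\<exists>l\<in>{a..k}. on_pipe u w l (c, s))"
    using T_RElb_iff[of c] T_JElb_iff[of c] T_horizontal_iff[of c] T_vertical_iff[of c]
    by (cases s; cases "T c") auto
  then show ?thesis unfolding strands_iff by simp
qed

lemma on_pipe_strands:
  assumes "l \<in> {a..k}" "on_pipe u w l x"
  shows "x \<in> strands a n T"
  using u_in[OF assms(1)] w_in[OF assms(1)] assms strands_T by (cases x; cases "snd x") auto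

lemma on_pipe_unique:
  assumes "l \<in> {a..k}" "l' \<in> {a..k}" "on_pipe u w l x" "on_pipe u w l' x"
  shows "l = l'"
  using assms admissible_spans_disjoint[OF adm, of l l' "fst x"] u_eq_iff w_eq_iff
  by (cases x; cases "snd x") auto

lemma joined_on_pipe:
  assumes "joined a n T x y" and l: "l \<in> {a..k}" "on_pipe u w l x"
    and l': "l' \<in> {a..k}" "on_pipe u w l' y"
  shows "l = l'"
proof -
  obtain e where e: "e \<in> strand_edges x" "e \<in> strand_edges y"
    using assms(1) unfolding joined_def by blast
  show ?thesis
  proof (cases e)
    case (VE c)
    then have "u l < c \<and> c \<le> w l" "u l' < c \<and> c \<le> w l'"
      using on_pipe_edges(1)[OF l(2)] on_pipe_edges(1)[OF l'(2)] e by auto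
    then show ?thesis using admissible_spans_disjoint[OF adm l(1) _ l'(1), of c] by auto
  next
    case (TE c)
    then show ?thesis using on_pipe_edges(2)[OF l(2)] on_pipe_edges(2)[OF l'(2)] e w_eq_iff by auto
  next
    case (BE c)
    then show ?thesis using on_pipe_edges(3)[OF l(2)] on_pipe_edges(3)[OF l'(2)] e u_eq_iff by auto
  qed
qed

lemma on_pipe_connected:
  assumes l: "l \<in> {a..k}" and x: "on_pipe u w l x" and y: "on_pipe u w l y"
  shows "(joined a n T)\<^sup>*\<^sup>* x y"
proof (cases "u l < w l")
  case False
  then show ?thesis using x y by (cases x; cases "snd x"; cases y; cases "snd y") auto
next
  case True
  have "T (u l) = RElb" "T (w l) = JElb" "\<forall>c. u l < c \<and> c < w l \<longrightarrow> T c \<in> {Hor, Cross}"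
    using T_RElb_iff T_JElb_iff T_horizontal_iff l True by auto
  note run = run_connected[OF u_in[OF l] _ True this]
  have "(joined a n T)\<^sup>*\<^sup>* (u l, SR) z" if "on_pipe u w l z" for z
    using that run w_in[OF l] True by (cases z; cases "snd z") auto
  then show ?thesis
    using x y joined_rtranclp_sym rtranclp_trans by metis
qed

lemma uses_right_T: "uses_right (T c) \<longleftrightarrow> (\<exists>l\<in>{a..k}. u l \<le> c \<and> c < w l)"
  using T_RElb_iff[of c] T_horizontal_iff[of c] unfolding uses_right_iff by force

lemma uses_left_T: "uses_left (T c) \<longleftrightarrow> (\<exists>l\<in>{a..k}. u l < c \<and> c \<le> w l)"
  using T_JElb_iff[of c] T_horizontal_iff[of c] unfolding uses_left_iff by force

lemma consistent_T: "consistent a n T"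
  unfolding consistent_def uses_right_T uses_left_T by auto

definition canonical_pipe :: "int \<Rightarrow> pipe" where
  "canonical_pipe l = {x \<in> strands a n T. on_pipe u w l x}"

lemma pipe_of_T:
  assumes x: "x \<in> strands a n T" and l: "l \<in> {a..k}" "on_pipe u w l x"
  shows "pipe_of a n T x = canonical_pipe l"
proof
  show "pipe_of a n T x \<subseteq> canonical_pipe l"
  proof
    fix y assume "y \<in> pipe_of a n T x"
    then have "(joined a n T)\<^sup>*\<^sup>* x y" unfolding pipe_of_def by simp
    then show "y \<in> canonical_pipe l"
    proof (induction rule: rtranclp_induct)
      case (step y z)
      then have z: "z \<in> strands a n T" unfolding joined_def by simp
      then obtain l' where l': "l' \<in> {a..k}" "on_pipe u w l' z"
        using strands_T by (cases z) blast
      have "l = l'"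
        using joined_on_pipe[OF step.hyps(2) l(1) _ l'] step.IH unfolding canonical_pipe_def by simp
      then show ?case unfolding canonical_pipe_def using z l' by simp
    qed (use x l in \<open>simp add: canonical_pipe_def\<close>)
  qed
  show "canonical_pipe l \<subseteq> pipe_of a n T x"
    unfolding canonical_pipe_def pipe_of_def using on_pipe_connected[OF l] by auto
qed

definition top_strand :: "int \<Rightarrow> int \<times> strand_kind" where
  "top_strand l = (if u l = w l then (w l, SV) else (w l, SJ))"

definition bottom_strand :: "int \<Rightarrow> int \<times> strand_kind" where
  "bottom_strand l = (if u l = w l then (u l, SV) else (u l, SR))"

lemma top_bottom_strand:
  assumes "l \<in> {a..k}"
  shows "top_strand l \<in> canonical_pipe l" "TE (w l) \<in> strand_edges (top_strand l)"
    and "bottom_strand l \<in> canonical_pipe l" "BE (u l) \<in> strand_edges (bottom_strand l)"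
proof -
  have "on_pipe u w l (top_strand l)" "on_pipe u w l (bottom_strand l)"
    using admissible_spans_le[OF adm assms] unfolding top_strand_def bottom_strand_def by auto
  then show "top_strand l \<in> canonical_pipe l" "bottom_strand l \<in> canonical_pipe l"
    unfolding canonical_pipe_def using on_pipe_strands[OF assms] by auto
qed (simp_all add: top_strand_def bottom_strand_def)

lemma canonical_pipe_edges:
  assumes "l \<in> {a..k}"
  shows "TE (w l) \<in> pipe_edges (canonical_pipe l)" "BE (u l) \<in> pipe_edges (canonical_pipe l)"
  using top_bottom_strand[OF assms] unfolding pipe_edges_def by blast+

lemma canonical_pipe_edgesD:
  assumes "e \<in> pipe_edges (canonical_pipe l)"
  shows "e = VE c \<Longrightarrow> u l < c \<and> c \<le> w l" "e = TE c \<Longrightarrow> w l = c" "e = BE c \<Longrightarrow> u l = c"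
proof -
  obtain x where "x \<in> canonical_pipe l" "e \<in> strand_edges x"
    using assms unfolding pipe_edges_def by blast
  then have "on_pipe u w l x" "e \<in> strand_edges x" unfolding canonical_pipe_def by auto
  then show "e = VE c \<Longrightarrow> u l < c \<and> c \<le> w l" "e = TE c \<Longrightarrow> w l = c" "e = BE c \<Longrightarrow> u l = c"
    using on_pipe_edges by auto
qed

lemma canonical_pipe_vertical: "(c, SV) \<in> canonical_pipe l \<Longrightarrow> c = u l \<and> u l = w l"
  unfolding canonical_pipe_def by auto

lemma canonical_pipe_horizontal: "(c, SH) \<in> canonical_pipe l \<Longrightarrow> u l < c \<and> c < w l"
  unfolding canonical_pipe_def by auto

lemma pipes_T: "p \<in> pipes a n T \<longleftrightarrow> (\<exists>l\<in>{a..k}. p = canonical_pipe l)"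
proof
  assume "p \<in> pipes a n T"
  then obtain x where x: "x \<in> strands a n T" "p = pipe_of a n T x" by (elim pipesE)
  then obtain l where "l \<in> {a..k}" "on_pipe u w l x" using strands_T by (cases x) blast
  then show "\<exists>l\<in>{a..k}. p = canonical_pipe l" using pipe_of_T x by blast
next
  assume "\<exists>l\<in>{a..k}. p = canonical_pipe l"
  then obtain l where l: "l \<in> {a..k}" "p = canonical_pipe l" by blast
  have x: "top_strand l \<in> strands a n T" "on_pipe u w l (top_strand l)"
    using top_bottom_strand(1)[OF l(1)] unfolding canonical_pipe_def by auto
  then show "p \<in> pipes a n T" using pipe_of_T[OF x(1) l(1) x(2)] pipe_of_in_pipes l by metis
qed

lemma pipes_TE:
  assumes "p \<in> pipes a n T"
  obtains l where "l \<in> {a..k}" "p = canonical_pipe l"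
  using assms pipes_T by blast

lemma canonical_pipe_in_pipes: "l \<in> {a..k} \<Longrightarrow> canonical_pipe l \<in> pipes a n T"
  using pipes_T by blast

lemma canonical_pipe_inj:
  assumes "l \<in> {a..k}" "l' \<in> {a..k}" "canonical_pipe l = canonical_pipe l'"
  shows "l = l'"
proof -
  have "on_pipe u w l (top_strand l)" "on_pipe u w l' (top_strand l)"
    using top_bottom_strand(1)[OF assms(1)] assms(3) unfolding canonical_pipe_def by auto
  then show ?thesis using on_pipe_unique assms(1,2) by blast
qed

definition label :: "pipe \<Rightarrow> int" where
  "label p = (THE l. l \<in> {a..k} \<and> p = canonical_pipe l)"

lemma label_canonical_pipe: "l \<in> {a..k} \<Longrightarrow> label (canonical_pipe l) = l"
  unfolding label_def by (rule the_equality) (use canonical_pipe_inj in blast)+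

lemma is_BPD_T: "is_BPD a n T"
  unfolding is_BPD_def
proof (intro conjI ballI impI)
  fix p q assume "p \<in> pipes a n T" "q \<in> pipes a n T"
  obtain l where l: "p = canonical_pipe l" using \<open>p \<in> pipes a n T\<close> by (rule pipes_TE)
  obtain l' where l': "q = canonical_pipe l'" using \<open>q \<in> pipes a n T\<close> by (rule pipes_TE)
  let ?S = "{c \<in> {a..n}. cross_at T p q c}"
  have "?S \<subseteq> {u l} \<or> ?S \<subseteq> {u l'}"
  proof (cases "u l = w l")
    case True
    then have "(c, SH) \<notin> p" for c using canonical_pipe_horizontal unfolding l by fastforce
    then show ?thesis using canonical_pipe_vertical unfolding l cross_at_def by blast
  next
    case False
    then have "(c, SV) \<notin> p" for c using canonical_pipe_vertical unfolding l by blast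
    then show ?thesis using canonical_pipe_vertical unfolding l' cross_at_def by blast
  qed
  then show "card ?S \<le> 1" using card_mono[of "{u l}" ?S] card_mono[of "{u l'}" ?S] by auto
next
  fix p assume "p \<in> pipes a n T"
  then obtain l where l: "l \<in> {a..k}" "p = canonical_pipe l" by (rule pipes_TE)
  then show "enters a n p" "exits a n p"
    unfolding enters_def exits_def using canonical_pipe_edges[OF l(1)] u_in[OF l(1)] w_in[OF l(1)]
    by auto
qed (rule consistent_T)

lemma edge_cond_T:
  assumes g: "\<forall>l\<in>{a..k}. g (f l) = Some l" "\<forall>c\<in>{a..n}. g c \<noteq> None \<longrightarrow> c \<in> f ` {a..k}"
    and c: "c \<in> {a..n}"
    and edge: "\<And>l. l \<in> {a..k} \<Longrightarrow> E (f l) \<in> pipe_edges (canonical_pipe l)"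
    and edgeD: "\<And>l. E c \<in> pipe_edges (canonical_pipe l) \<Longrightarrow> f l = c"
  shows "edge_cond a n T label (E c) (g c)"
proof -
  have label: "g c = Some (label p)" if p: "p \<in> pipes a n T" "E c \<in> pipe_edges p" for p
  proof -
    obtain l where l: "l \<in> {a..k}" "p = canonical_pipe l" using p(1) by (rule pipes_TE)
    then have "f l = c" using edgeD p(2) by simp
    then show ?thesis using g(1) l label_canonical_pipe by auto
  qed
  moreover have "\<exists>p\<in>pipes a n T. E c \<in> pipe_edges p" if some: "g c \<noteq> None"
  proof -
    obtain l where "l \<in> {a..k}" "c = f l" using g(2) c some by blast
    then show ?thesis using edge canonical_pipe_in_pipes by blast
  qed
  ultimately show ?thesis unfolding edge_cond_def by auto
qed

lemma satisfies_T:
  assumes gN: "\<forall>l\<in>{a..k}. gN (w l) = Some l" "\<forall>c\<in>{a..n}. gN c \<noteq> None \<longrightarrow> c \<in> w ` {a..k}"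
    and gS: "\<forall>l\<in>{a..k}. gS (u l) = Some l" "\<forall>c\<in>{a..n}. gS c \<noteq> None \<longrightarrow> c \<in> u ` {a..k}"
  shows "satisfies a n T gN None gS None"
  unfolding satisfies_def
proof (intro exI[of _ label] conjI ballI)
  show "valid_labeling a n T label"
    unfolding valid_labeling_def
  proof (intro conjI ballI impI inj_onI)
    fix p q assume "p \<in> pipes a n T" "q \<in> pipes a n T" "label p = label q"
    then show "p = q" using label_canonical_pipe by (elim pipes_TE) auto
  next
    fix c p q assume "p \<in> pipes a n T" "q \<in> pipes a n T" "(c, SV) \<in> p" "(c, SH) \<in> q"
    then obtain l l' where l: "l \<in> {a..k}" "p = canonical_pipe l"
      and l': "l' \<in> {a..k}" "q = canonical_pipe l'"
      by (elim pipes_TE)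
    have "c = u l" "u l = w l" "u l' < c" "c < w l'"
      using canonical_pipe_vertical canonical_pipe_horizontal \<open>(c, SV) \<in> p\<close> \<open>(c, SH) \<in> q\<close>
      unfolding l l' by auto
    moreover have "l \<noteq> l'" using calculation by auto
    ultimately have "l < l'" using admissible_spans_inside[OF adm l'(1) l(1)] by auto
    then show "label p < label q" using l l' label_canonical_pipe by simp
  qed
  have "\<not> (u l \<le> n \<and> n < w l)" "\<not> (u l < a \<and> a \<le> w l)" if "l \<in> {a..k}" for l
    using u_in[OF that] w_in[OF that] by auto
  then have "\<not> (\<exists>p\<in>pipes a n T. VE (n + 1) \<in> pipe_edges p)" "\<not> (\<exists>p\<in>pipes a n T. VE a \<in> pipe_edges p)"
    unfolding ex_pipe_VE_iff uses_left_T uses_right_T by auto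
  then show "edge_cond a n T label (VE (n + 1)) None" "edge_cond a n T label (VE a) None"
    unfolding edge_cond_def by blast+
  fix c assume c: "c \<in> {a..n}"
  show "edge_cond a n T label (TE c) (gN c)"
    by (rule edge_cond_T[OF gN c, where E = TE])
      (use canonical_pipe_edges(1) canonical_pipe_edgesD(2) in blast)+
  show "edge_cond a n T label (BE c) (gS c)"
    by (rule edge_cond_T[OF gS c, where E = BE])
      (use canonical_pipe_edges(2) canonical_pipe_edgesD(3) in blast)+
qed

end

lemma canonical_Blank_iff:
  assumes adm: "admissible_spans a k u w" and c: "c \<in> {a..n}"
  shows "canonical_tiling a k u w c = Blank \<longleftrightarrow> c \<in> uncovered a k n u w"
proof -
  have le: "l \<in> {a..k} \<Longrightarrow> u l < w l \<or> u l = w l" for l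
    using admissible_spans_le[OF adm] by fastforce
  have "c \<in> u ` {a..k} \<longleftrightarrow> (\<exists>l\<in>{a..k}. u l < w l \<and> c = u l) \<or> (\<exists>l\<in>{a..k}. u l = w l \<and> c = w l)"
  proof
    assume "c \<in> u ` {a..k}"
    then obtain l where "l \<in> {a..k}" "c = u l" by blast
    then show "(\<exists>l\<in>{a..k}. u l < w l \<and> c = u l) \<or> (\<exists>l\<in>{a..k}. u l = w l \<and> c = w l)"
      using le[of l] by auto
  qed (force simp: image_iff)
  moreover have "c \<in> w ` {a..k} \<longleftrightarrow>
      (\<exists>l\<in>{a..k}. u l < w l \<and> c = w l) \<or> (\<exists>l\<in>{a..k}. u l = w l \<and> c = w l)"
  proof
    assume "c \<in> w ` {a..k}"
    then obtain l where "l \<in> {a..k}" "c = w l" by blast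
    then show "(\<exists>l\<in>{a..k}. u l < w l \<and> c = w l) \<or> (\<exists>l\<in>{a..k}. u l = w l \<and> c = w l)"
      using le[of l] by auto
  qed auto
  ultimately show ?thesis
    unfolding canonical_tiling_def uncovered_def using c by auto
qed

section \<open>Uniqueness of the BPD\<close>

locale boundary_BPD = row_permutations +
  fixes gN gS :: "int \<Rightarrow> int option" and D :: tiling and L :: "pipe \<Rightarrow> int"
  assumes a_le_k: "a \<le> k"
    and gN_w: "\<forall>l\<in>{a..k}. gN (w l) = Some l" and gN_dom: "\<forall>c\<in>{a..n}. gN c \<noteq> None \<longrightarrow> c \<in> w ` {a..k}"
    and gS_u: "\<forall>l\<in>{a..k}. gS (u l) = Some l" and gS_dom: "\<forall>c\<in>{a..n}. gS c \<noteq> None \<longrightarrow> c \<in> u ` {a..k}"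
    and consistent: "consistent a n D" and valid: "valid_labeling a n D L"
    and right_edge: "edge_cond a n D L (VE (n + 1)) None" and left_edge: "edge_cond a n D L (VE a) None"
    and top_edges: "\<forall>c\<in>{a..n}. edge_cond a n D L (TE c) (gN c)"
    and bottom_edges: "\<forall>c\<in>{a..n}. edge_cond a n D L (BE c) (gS c)"
begin

lemma gN_SomeD: "c \<in> {a..n} \<Longrightarrow> gN c = Some l \<Longrightarrow> l \<in> {a..k} \<and> c = w l"
  using gN_dom gN_w by fastforce

lemma gS_SomeD: "c \<in> {a..n} \<Longrightarrow> gS c = Some l \<Longrightarrow> l \<in> {a..k} \<and> c = u l"
  using gS_dom gS_u by fastforce

lemma not_uses_right_last: "\<not> uses_right (D n)"
  using right_edge ex_pipe_VE_iff[of a n D "n + 1"] a_le_k k_le_n unfolding edge_cond_def by auto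

lemma not_uses_left_first: "\<not> uses_left (D a)"
  using left_edge ex_pipe_VE_iff[of a n D a] a_le_k k_le_n unfolding edge_cond_def by auto

lemma top_used_iff: "c \<in> {a..n} \<Longrightarrow> D c \<in> {Vert, Cross, JElb} \<longleftrightarrow> c \<in> w ` {a..k}"
  using top_edges ex_pipe_TE_iff[of a n D c] gN_dom gN_w unfolding edge_cond_def by fastforce

lemma bottom_used_iff: "c \<in> {a..n} \<Longrightarrow> D c \<in> {Vert, Cross, RElb} \<longleftrightarrow> c \<in> u ` {a..k}"
  using bottom_edges ex_pipe_BE_iff[of a n D c] gS_dom gS_u unfolding edge_cond_def by fastforce

lemma label_TE:
  assumes "x \<in> strands a n D" "TE c \<in> strand_edges x"
  shows "gN c = Some (L (pipe_of a n D x))"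
proof -
  have "c \<in> {a..n}" using assms by (cases x; cases "snd x") (auto simp: strands_iff)
  then show ?thesis
    using top_edges pipe_of_in_pipes[OF assms(1)] pipe_edges_pipe_of[OF assms(2)]
    unfolding edge_cond_def by blast
qed

lemma label_BE:
  assumes "x \<in> strands a n D" "BE c \<in> strand_edges x"
  shows "gS c = Some (L (pipe_of a n D x))"
proof -
  have "c \<in> {a..n}" using assms by (cases x; cases "snd x") (auto simp: strands_iff)
  then show ?thesis
    using bottom_edges pipe_of_in_pipes[OF assms(1)] pipe_edges_pipe_of[OF assms(2)]
    unfolding edge_cond_def by blast
qed

lemma scan_right:
  assumes "x \<in> {a..n}" "uses_right (D x)"
  shows "\<exists>y. x < y \<and> y \<le> n \<and> D y = JElb \<and> (\<forall>c. x < c \<and> c < y \<longrightarrow> D c \<in> {Hor, Cross})"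
proof -
  have "x \<le> n" using assms by simp
  then show ?thesis using assms
  proof (induction x rule: int_le_induct)
    case base
    then show ?case using not_uses_right_last by simp
  next
    case (step x)
    then have "uses_left (D x)" using consistent unfolding consistent_def by force
    show ?case
    proof (cases "D x = JElb")
      case False
      then have "D x \<in> {Hor, Cross}" using \<open>uses_left (D x)\<close> uses_left_iff by auto
      then obtain y where y: "x < y" "y \<le> n" "D y = JElb"
          and between: "\<forall>c. x < c \<and> c < y \<longrightarrow> D c \<in> {Hor, Cross}"
        using step uses_right_iff by auto
      have "D c \<in> {Hor, Cross}" if "x - 1 < c" "c < y" for c
        using that between \<open>D x \<in> {Hor, Cross}\<close> by (cases "c = x") auto
      then show ?thesis using y by (intro exI[of _ y]) auto
    qed (use step in \<open>auto intro!: exI[of _ x]\<close>)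
  qed
qed

lemma scan_left:
  assumes "x \<in> {a..n}" "uses_left (D x)"
  shows "\<exists>z. a \<le> z \<and> z < x \<and> D z = RElb \<and> (\<forall>c. z < c \<and> c < x \<longrightarrow> D c \<in> {Hor, Cross})"
proof -
  have "a \<le> x" using assms by simp
  then show ?thesis using assms
  proof (induction x rule: int_ge_induct)
    case base
    then show ?case using not_uses_left_first by simp
  next
    case (step x)
    then have "uses_right (D x)" using consistent unfolding consistent_def by force
    show ?case
    proof (cases "D x = RElb")
      case False
      then have "D x \<in> {Hor, Cross}" using \<open>uses_right (D x)\<close> uses_right_iff by auto
      then obtain z where z: "a \<le> z" "z < x" "D z = RElb"
          and between: "\<forall>c. z < c \<and> c < x \<longrightarrow> D c \<in> {Hor, Cross}"
        using step uses_left_iff by auto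
      have "D c \<in> {Hor, Cross}" if "z < c" "c < x + 1" for c
        using that between \<open>D x \<in> {Hor, Cross}\<close> by (cases "c = x") auto
      then show ?thesis using z by (intro exI[of _ z]) auto
    qed (use step in \<open>auto intro!: exI[of _ x]\<close>)
  qed
qed

lemma crossing_label:
  "c \<in> {a..n} \<Longrightarrow> D c = Cross \<Longrightarrow> p \<in> pipes a n D \<Longrightarrow> q \<in> pipes a n D \<Longrightarrow>
    (c, SV) \<in> p \<Longrightarrow> (c, SH) \<in> q \<Longrightarrow> L p < L q"
  using valid unfolding valid_labeling_def by blast

lemma pipe_from_RElb:
  assumes l: "l \<in> {a..k}" and elbow: "D (u l) = RElb"
  shows "u l < w l" "D (w l) = JElb"
    and "u l < c \<Longrightarrow> c < w l \<Longrightarrow>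
      D c = Hor \<or> (D c = Cross \<and> (\<exists>l'\<in>{a..k}. l' < l \<and> u l' = c \<and> w l' = c))"
proof -
  let ?x = "u l"
  have x: "?x \<in> {a..n}" "gS ?x = Some l" using u_in[OF l] gS_u l by auto
  obtain y where y: "?x < y" "y \<le> n" "D y = JElb"
    and between: "\<forall>c. ?x < c \<and> c < y \<longrightarrow> D c \<in> {Hor, Cross}"
    using scan_right[OF x(1)] elbow by auto
  note run = run_connected[OF x(1) y(2,1) elbow y(3) between]
  have sr: "(?x, SR) \<in> strands a n D" using elbow x strands_iff by auto
  let ?p = "pipe_of a n D (?x, SR)"
  have p: "?p \<in> pipes a n D" "L ?p = l" using pipe_of_in_pipes[OF sr] label_BE[OF sr] x by auto
  have yj: "(y, SJ) \<in> ?p" unfolding pipe_of_def mem_Collect_eq by (rule run(1))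
  then have "?p = pipe_of a n D (y, SJ)" using pipe_eq_pipe_of[OF p(1)] by blast
  then have "gN y = Some l" using label_TE[of "(y, SJ)" y] pipe_subset_strands[OF p(1)] yj p(2) by auto
  then have yw: "y = w l" using gN_SomeD[of y l] y x(1) w_eq_iff by auto
  then show "u l < w l" "D (w l) = JElb" using y by auto
  assume c: "u l < c" "c < w l"
  show "D c = Hor \<or> (D c = Cross \<and> (\<exists>l'\<in>{a..k}. l' < l \<and> u l' = c \<and> w l' = c))"
  proof (cases "D c = Cross")
    case True
    have cin: "c \<in> {a..n}" using c x y yw by auto
    have sv: "(c, SV) \<in> strands a n D" using True cin strands_iff by auto
    let ?q = "pipe_of a n D (c, SV)"
    have "(c, SH) \<in> ?p" unfolding pipe_of_def mem_Collect_eq by (rule run(2)) (use c yw in auto)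
    then have "L ?q < l"
      using crossing_label[OF cin True pipe_of_in_pipes[OF sv] p(1) pipe_of_self] p(2) by simp
    moreover have "L ?q \<in> {a..k}" "c = w (L ?q)" "c = u (L ?q)"
      using gN_SomeD[OF cin label_TE[OF sv]] gS_SomeD[OF cin label_BE[OF sv]] by auto
    ultimately show ?thesis using True by metis
  qed (use between c yw in auto)
qed

lemma pipe_shape:
  assumes l: "l \<in> {a..k}"
  shows "(u l = w l \<and> D (u l) \<in> {Vert, Cross}) \<or>
    (u l < w l \<and> D (u l) = RElb \<and> D (w l) = JElb \<and>
      (\<forall>c. u l < c \<and> c < w l \<longrightarrow>
        D c = Hor \<or> (D c = Cross \<and> (\<exists>l'\<in>{a..k}. l' < l \<and> u l' = c \<and> w l' = c))))"
proof -
  have x: "u l \<in> {a..n}" "gS (u l) = Some l" using u_in[OF l] gS_u l by auto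
  then have "D (u l) \<in> {Vert, Cross, RElb}" using bottom_used_iff l by blast
  then consider "D (u l) \<in> {Vert, Cross}" | "D (u l) = RElb" by auto
  then show ?thesis
  proof cases
    case 1
    then have sv: "(u l, SV) \<in> strands a n D" using x strands_iff by auto
    then have "gN (u l) = Some l" using label_TE[OF sv] label_BE[OF sv] x by simp
    then show ?thesis using gN_SomeD[OF x(1)] 1 w_eq_iff by auto
  qed (use pipe_from_RElb[OF l] in auto)
qed

lemma pipe_shape_nontrivial:
  assumes "l \<in> {a..k}" "u l < w l"
  shows "D (u l) = RElb" "D (w l) = JElb"
    and "u l < c \<Longrightarrow> c < w l \<Longrightarrow>
      D c = Hor \<or> (D c = Cross \<and> (\<exists>l'\<in>{a..k}. l' < l \<and> u l' = c \<and> w l' = c))"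
  using pipe_shape[OF assms(1)] assms(2) by auto

lemma admissible_spans_D: "admissible_spans a k u w"
proof (rule admissible_spansI)
  show "u l \<le> w l" if "l \<in> {a..k}" for l using pipe_shape[OF that] by auto
  fix l l' assume l: "l \<in> {a..k}" and l': "l' \<in> {a..k}" "l' \<noteq> l" and nt: "u l < w l"
    and h: "u l \<le> u l' \<and> u l' \<le> w l \<or> u l \<le> w l' \<and> w l' \<le> w l"
  note shape = pipe_shape_nontrivial[OF l nt]
  have u': "D (u l') \<in> {Vert, Cross, RElb}" using bottom_used_iff u_in[OF l'(1)] l'(1) by blast
  have w': "D (w l') \<in> {Vert, Cross, JElb}" using top_used_iff w_in[OF l'(1)] l'(1) by blast
  from h show "u l' = w l' \<and> l' < l \<and> u l < u l' \<and> u l' < w l"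
  proof
    assume "u l \<le> u l' \<and> u l' \<le> w l"
    moreover have "u l' \<noteq> u l" "u l' \<noteq> w l" using u_eq_iff l'(2) u' shape(2) by auto
    ultimately have i: "u l < u l'" "u l' < w l" by auto
    then obtain l'' where "l'' \<in> {a..k}" "l'' < l" "u l'' = u l'" "w l'' = u l'"
      using shape(3)[OF i] u' by auto
    then show ?thesis using i u_eq_iff by auto
  next
    assume "u l \<le> w l' \<and> w l' \<le> w l"
    moreover have "w l' \<noteq> w l" "w l' \<noteq> u l" using w_eq_iff l'(2) w' shape(1) by auto
    ultimately have i: "u l < w l'" "w l' < w l" by auto
    then obtain l'' where "l'' \<in> {a..k}" "l'' < l" "u l'' = w l'" "w l'' = w l'"
      using shape(3)[OF i] w' by auto
    then show ?thesis using i w_eq_iff by auto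
  qed
qed

lemma D_elbow_at_span_end:
  assumes c: "c \<in> {a..n}" and "D c \<in> {RElb, JElb}"
  shows "\<exists>l\<in>{a..k}. u l < w l \<and> (c = u l \<or> c = w l)"
proof -
  from assms consider "D c = RElb" "c \<in> u ` {a..k}" | "D c = JElb" "c \<in> w ` {a..k}"
    using bottom_used_iff[OF c] top_used_iff[OF c] by auto
  then show ?thesis using pipe_shape by cases fastforce+
qed

lemma D_horizontal_inside_span:
  assumes c: "c \<in> {a..n}" and dc: "D c \<in> {Hor, Cross}"
  shows "\<exists>l\<in>{a..k}. u l < c \<and> c < w l"
proof -
  obtain z where z: "a \<le> z" "z < c" "D z = RElb"
    and between: "\<forall>c'. z < c' \<and> c' < c \<longrightarrow> D c' \<in> {Hor, Cross}"
    using scan_left[OF c] dc uses_left_iff by auto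
  obtain l where l: "l \<in> {a..k}" "z = u l"
    using z bottom_used_iff[of z] c by auto
  then have nt: "u l < w l" "D (w l) = JElb" using pipe_from_RElb z(3) by auto
  have "c < w l"
  proof (rule ccontr)
    assume "\<not> c < w l"
    then consider "w l = c" | "w l < c" by linarith
    then show False using nt dc between[rule_format, of "w l"] l(2) by cases auto
  qed
  then show ?thesis using l z(2) by blast
qed

lemma D_eq_canonical:
  assumes c: "c \<in> {a..n}"
  shows "D c = canonical_tiling a k u w c"
proof (cases "\<exists>l\<in>{a..k}. u l < w l \<and> (c = u l \<or> c = w l)")
  case True
  then obtain l where l: "l \<in> {a..k}" "u l < w l" "c = u l \<or> c = w l" by blast
  have "\<not> (\<exists>l'\<in>{a..k}. u l' < w l' \<and> c = u l')" if "c = w l"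
    using admissible_spans_disjoint[OF admissible_spans_D l(1,2)] l that by force
  then show ?thesis
    using l pipe_shape_nontrivial[OF l(1,2)] unfolding canonical_tiling_def by auto
next
  case not_end: False
  show ?thesis
  proof (cases "\<exists>l\<in>{a..k}. u l < c \<and> c < w l")
    case True
    then have "D c \<in> {Hor, Cross}" using pipe_shape_nontrivial by force
    then show ?thesis using True not_end top_used_iff[OF c] unfolding canonical_tiling_def by auto
  next
    case False
    then have "D c \<in> {Vert, Blank}"
      using not_end D_elbow_at_span_end[OF c] D_horizontal_inside_span[OF c] by (cases "D c") auto
    then show ?thesis using False not_end top_used_iff[OF c] unfolding canonical_tiling_def by auto
  qed
qed

end

lemma bij_betw_boundary_image:
  assumes "bij_betw (\<lambda>c. the (g c)) {c \<in> A. g c \<noteq> None} L"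
    and "\<forall>l\<in>L. g (f l) = Some l" and "f ` L \<subseteq> A"
  shows "\<forall>c\<in>A. g c \<noteq> None \<longrightarrow> c \<in> f ` L"
proof (intro ballI impI)
  fix c assume c: "c \<in> A" "g c \<noteq> None"
  then have l: "the (g c) \<in> L" using bij_betw_apply[OF assms(1)] by simp
  then have "f (the (g c)) \<in> {c \<in> A. g c \<noteq> None}" "the (g (f (the (g c)))) = the (g c)"
    using assms(2,3) by auto
  then have "f (the (g c)) = c"
    using c bij_betw_imp_inj_on[OF assms(1)] by (auto dest: inj_onD)
  then show "c \<in> f ` L" using l by (metis imageI)
qed

lemma kpath_iff_admissible_spans:
  assumes "a \<le> k" "k \<le> n" "u \<in> Sperm a n" "w \<in> Sperm a n"
    and "strict_antimono_on {k<..n} u" "strict_antimono_on {k<..n} w"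
  shows "kpath k u w \<longleftrightarrow> admissible_spans a k u w"
proof
  assume "admissible_spans a k u w"
  moreover have "\<forall>l\<in>{a..k}. u l < w l \<longrightarrow> a - 1 < u l"
    using Sperm_in[OF assms(3)] assms(2) by fastforce
  ultimately show "kpath k u w"
    using admissible_spans_kpath_above[OF assms(1,2,4,6,3,5)] kpath_above_imp_kpath by blast
qed (use kpath_imp_admissible_spans assms in blast)

lemma canonical_tiling_blanks:
  assumes "a \<le> k" "k \<le> n" "u \<in> Sperm a n" "w \<in> Sperm a n"
    and "strict_antimono_on {k<..n} u" "strict_antimono_on {k<..n} w"
    and adm: "admissible_spans a k u w"
  shows "{c \<in> {a..n}. canonical_tiling a k u w c = Blank} = fixset {k<..n} u w"
proof -
  have "\<forall>l\<in>{a..k}. u l < w l \<longrightarrow> a - 1 < u l"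
    using Sperm_in[OF assms(3)] assms(2) by fastforce
  then have "fixset {k<..n} u w = uncovered a k n u w"
    using admissible_spans_kpath_above[OF assms(1,2,4,6,3,5,7)] by blast
  then show ?thesis using canonical_Blank_iff[OF adm] unfolding uncovered_def by auto
qed

lemma canonical_tiling_satisfies:
  assumes "k \<le> n" "u \<in> Sperm a n" "w \<in> Sperm a n" "admissible_spans a k u w"
    and "\<forall>l\<in>{a..k}. gN (w l) = Some l" "\<forall>c\<in>{a..n}. gN c \<noteq> None \<longrightarrow> c \<in> w ` {a..k}"
    and "\<forall>l\<in>{a..k}. gS (u l) = Some l" "\<forall>c\<in>{a..n}. gS c \<noteq> None \<longrightarrow> c \<in> u ` {a..k}"
  shows "is_BPD a n (canonical_tiling a k u w)"
    and "satisfies a n (canonical_tiling a k u w) gN None gS None"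
proof -
  interpret canonical a k n u w using assms(1-4) by unfold_locales
  show "is_BPD a n T" by (rule is_BPD_T)
  show "satisfies a n T gN None gS None" using satisfies_T assms(5-8) by blast
qed

lemma satisfying_BPD_eq_canonical:
  assumes "a \<le> k" "k \<le> n" "u \<in> Sperm a n" "w \<in> Sperm a n"
    and "\<forall>l\<in>{a..k}. gN (w l) = Some l" "\<forall>c\<in>{a..n}. gN c \<noteq> None \<longrightarrow> c \<in> w ` {a..k}"
    and "\<forall>l\<in>{a..k}. gS (u l) = Some l" "\<forall>c\<in>{a..n}. gS c \<noteq> None \<longrightarrow> c \<in> u ` {a..k}"
    and "is_BPD a n D" "satisfies a n D gN None gS None"
  shows "admissible_spans a k u w" and "\<forall>c\<in>{a..n}. D c = canonical_tiling a k u w c"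
proof -
  obtain L where "valid_labeling a n D L" "edge_cond a n D L (VE (n + 1)) None"
      "edge_cond a n D L (VE a) None" "\<forall>c\<in>{a..n}. edge_cond a n D L (TE c) (gN c)"
      "\<forall>c\<in>{a..n}. edge_cond a n D L (BE c) (gS c)"
    using assms(10) unfolding satisfies_def by blast
  moreover have "consistent a n D" using assms(9) unfolding is_BPD_def by simp
  ultimately interpret boundary_BPD a k n u w gN gS D L using assms(1-8) by unfold_locales
  show "admissible_spans a k u w" by (rule admissible_spans_D)
  show "\<forall>c\<in>{a..n}. D c = canonical_tiling a k u w c" using D_eq_canonical by blast
qed

theorem lemma2p42:
  fixes a k n :: int
    and gN gS :: "int \<Rightarrow> int option" and gE gW :: "int option"
    and u w :: "int \<Rightarrow> int"
  assumes "a \<le> k" and "k \<le> n"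
    and "bij_betw (\<lambda>c. the (gN c)) {c \<in> {a..n}. gN c \<noteq> None} {a..k}"
    and "bij_betw (\<lambda>c. the (gS c)) {c \<in> {a..n}. gS c \<noteq> None} {a..k}"
    and "gE = None" and "gW = None"
    and "w \<in> Sperm a n" and "\<forall>l\<in>{a..k}. gN (w l) = Some l"
    and "\<forall>i j. k < i \<and> i < j \<and> j \<le> n \<longrightarrow> w j < w i"
    and "u \<in> Sperm a n" and "\<forall>l\<in>{a..k}. gS (u l) = Some l"
    and "\<forall>i j. k < i \<and> i < j \<and> j \<le> n \<longrightarrow> u j < u i"
  shows "(kpath k u w \<longleftrightarrow> (\<exists>D. is_BPD a n D \<and> satisfies a n D gN gE gS gW))
    \<and> (kpath k u w \<longrightarrow>
         (\<exists>D. is_BPD a n D \<and> satisfies a n D gN gE gS gW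
            \<and> (\<forall>D'. is_BPD a n D' \<and> satisfies a n D' gN gE gS gW
                     \<longrightarrow> (\<forall>c\<in>{a..n}. D' c = D c))
            \<and> {c \<in> {a..n}. D c = Blank} = fixset {k<..n} u w))"
proof -
  note ak = assms(1) and kn = assms(2) and uS = assms(10) and wS = assms(7)
  have dec: "strict_antimono_on {k<..n} u" "strict_antimono_on {k<..n} w"
    using assms(9,12) unfolding monotone_on_def by auto
  have "w ` {a..k} \<subseteq> {a..n}" "u ` {a..k} \<subseteq> {a..n}"
    using Sperm_in[OF wS] Sperm_in[OF uS] kn by auto
  note boundary = assms(8) bij_betw_boundary_image[OF assms(3,8) this(1)]
    assms(11) bij_betw_boundary_image[OF assms(4,11) this(2)]
  note canonical = canonical_tiling_satisfies[OF kn uS wS _ boundary]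
    and unique = satisfying_BPD_eq_canonical[OF ak kn uS wS boundary]
    and blanks = canonical_tiling_blanks[OF ak kn uS wS dec]
  show ?thesis
    unfolding assms(5,6) kpath_iff_admissible_spans[OF ak kn uS wS dec]
  proof (intro conjI impI)
    show "admissible_spans a k u w \<longleftrightarrow> (\<exists>D. is_BPD a n D \<and> satisfies a n D gN None gS None)"
      using canonical unique(1) by blast
  qed (use canonical unique(2) blanks in blast)
qed

end
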